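(* Let $p\ge5$ be a prime with $\left(\frac{-2}{p}\right)=-1$. Then for all integers $k,m\ge0$ with $p\nmid m$, $$b^{4}_{3,4}\!\left(16p^{2k+1}m+2p^{2k+2}+1\right)\equiv 0\pmod 8\quad\text{and}\quad b^{4}_{3,4}\!\left(48p^{2k+1}m+6p^{2k+2}+1\right)\equiv 0\pmod 8.$$
   Context: For integers $r\ge1$ write $f_r=\prod_{i\ge1}(1-q^{ri})$. $b^{4}_{3,4}(n)$ is the number of $4$-colored partitions of $n$ into parts not divisible by $3$ or $4$, i.e. $\sum_{n\ge0}b^4_{3,4}(n)q^n=\dfrac{f_3^4f_4^4}{f_1^4f_{12}^4}$. $\left(\frac{a}{p}\right)$ denotes the Legendre symbol. *)

theory Defs
  imports "HOL-Computational_Algebra.Formal_Power_Series" "HOL-Number_Theory.Number_Theory"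
begin

definition f_trunc :: "nat \<Rightarrow> nat \<Rightarrow> rat fps" where
  "f_trunc N r = (\<Prod>i\<in>{1..N}. 1 - fps_X ^ (r * i))"

(* Factors (1-q^{ri}) with r i > n
   do not affect the coefficient of q^n, so truncating the products at i = n is exact.  The coefficient is an integer (constant term of the
   denominator is 1); floor is only used to view it in int. *)
definition b434 :: "nat \<Rightarrow> int" where
  "b434 n = \<lfloor>fps_nth ((f_trunc n 3) ^ 4 * (f_trunc n 4) ^ 4
                     / ((f_trunc n 1) ^ 4 * (f_trunc n 12) ^ 4)) n\<rfloor>"

end

theory Submission
  imports Defs "HOL-Library.Z2" "HOL-Library.Disjoint_Sets"
begin

(* Write A = f_3 f_4 / (f_1 f_12), so that b434 is generated by A^4. Gauss's identity
   psi(q) f_1 = f_2^2 makes psi(q) congruent to f_1^3 modulo 2, hence A to D / psi(q^6), where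
   D = psi(q) psi(q^3). Splitting D = D_0 + D_1 into even and odd parts and using that
   1 / psi(q^6) is even, the odd coefficients of A^4 agree modulo 8 with those of
   4 D_0 D_1 (D_0^2 + D_1^2) / psi(q^6)^4, and reducing the cofactor of 4 modulo 2 shows
   b434(4t + 3) = 4 [q^t] D (mod 8). An involution on the representations
   8t + 4 = x^2 + 3y^2 with x, y odd and positive, coming from the units of Z[(1 + sqrt(-3))/2],
   has as fixed points exactly those with x = y or x = 3y; hence D is congruent to
   psi(q^4) + q psi(q^12) modulo 2. For t = 4M and t = 12M + 1 the relevant coefficient is
   [q^M] psi, which vanishes unless 8M + 1 is a square. With M = p^(2k+1) m + (p^(2k+2) - 1)/8
   we have 8M + 1 = p^(2k+1) (8m + p), which is not a square since p does not divide 8m + p. *)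

unbundle fps_syntax

section \<open>Truncation and congruences of power series\<close>

definition fps_agree :: "nat \<Rightarrow> 'a::zero fps \<Rightarrow> 'a fps \<Rightarrow> bool" where
  "fps_agree N a b \<longleftrightarrow> (\<forall>i<N. a $ i = b $ i)"

lemma fps_agree_refl [simp]: "fps_agree N a a"
  by (simp add: fps_agree_def)

lemma fps_agree_sym: "fps_agree N a b \<Longrightarrow> fps_agree N b a"
  by (simp add: fps_agree_def)

lemma fps_agree_trans [trans]: "fps_agree N a b \<Longrightarrow> fps_agree N b c \<Longrightarrow> fps_agree N a c"
  by (simp add: fps_agree_def)

lemma fps_agree_mono: "fps_agree N a b \<Longrightarrow> M \<le> N \<Longrightarrow> fps_agree M a b"
  by (simp add: fps_agree_def)

lemma fps_agree_add:
  "fps_agree N a b \<Longrightarrow> fps_agree N c d \<Longrightarrow> fps_agree N (a + c) (b + d :: 'a::monoid_add fps)"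
  by (simp add: fps_agree_def)

lemma fps_agree_diff:
  "fps_agree N a b \<Longrightarrow> fps_agree N c d \<Longrightarrow> fps_agree N (a - c) (b - d :: 'a::group_add fps)"
  by (simp add: fps_agree_def)

lemma fps_agree_mult:
  "fps_agree N a b \<Longrightarrow> fps_agree N c d \<Longrightarrow> fps_agree N (a * c) (b * d :: 'a::comm_semiring_1 fps)"
  unfolding fps_agree_def fps_mult_nth by (auto intro!: sum.cong)

lemma fps_agree_power:
  "fps_agree N a b \<Longrightarrow> fps_agree N (a ^ k) (b ^ k :: 'a::comm_semiring_1 fps)"
  by (induction k) (auto intro: fps_agree_mult)

lemma fps_agree_sum:
  "(\<And>i. i \<in> S \<Longrightarrow> fps_agree N (f i) (g i)) \<Longrightarrow> fps_agree N (sum f S) (sum g S)"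
  unfolding fps_agree_def fps_sum_nth by (auto intro!: sum.cong)

lemma fps_agree_prod:
  "(\<And>i. i \<in> S \<Longrightarrow> fps_agree N (f i) (g i :: 'a::comm_semiring_1 fps)) \<Longrightarrow>
     fps_agree N (prod f S) (prod g S)"
  by (induction S rule: infinite_finite_induct) (auto intro: fps_agree_mult)

lemma fps_agree_X_power_mult:
  "N \<le> k \<Longrightarrow> fps_agree N (fps_X ^ k * a) (0 :: 'a::comm_semiring_1 fps)"
  by (simp add: fps_agree_def fps_X_power_mult_nth)

lemma fps_inverse_diff:
  fixes a b :: "'a::field fps"
  assumes "a $ 0 \<noteq> 0" "b $ 0 \<noteq> 0"
  shows "inverse a - inverse b = (b - a) * (inverse a * inverse b)"
proof -
  have "inverse a - inverse b = inverse a * (b * inverse b) - (a * inverse a) * inverse b"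
    using assms by (simp add: inverse_mult_eq_1')
  also have "\<dots> = (b - a) * (inverse a * inverse b)"
    by (simp add: algebra_simps)
  finally show ?thesis .
qed

lemma fps_agree_inverse:
  fixes a b :: "'a::field fps"
  assumes "fps_agree N a b" "a $ 0 \<noteq> 0" "b $ 0 \<noteq> 0"
  shows "fps_agree N (inverse a) (inverse b)"
proof -
  have "fps_agree N ((b - a) * (inverse a * inverse b)) (0 * (inverse a * inverse b))"
    using assms(1) by (intro fps_agree_mult) (simp_all add: fps_agree_def)
  then have "fps_agree N (inverse a - inverse b) 0"
    by (simp add: fps_inverse_diff[OF assms(2,3)])
  then show ?thesis
    by (simp add: fps_agree_def)
qed

lemma fps_eqI_agree: "(\<And>N. fps_agree N a b) \<Longrightarrow> a = b"
  unfolding fps_agree_def by (simp add: fps_eq_iff) (meson lessI)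

definition int_coeffs :: "'a::ring_1 fps \<Rightarrow> bool" where
  "int_coeffs a \<longleftrightarrow> (\<forall>n. a $ n \<in> \<int>)"

lemma int_coeffs_0 [simp]: "int_coeffs 0"
  and int_coeffs_1 [simp]: "int_coeffs 1"
  and int_coeffs_X [simp]: "int_coeffs fps_X"
  and int_coeffs_numeral [simp]: "int_coeffs (numeral k)"
  by (auto simp: int_coeffs_def fps_X_def numeral_fps_const)

lemma int_coeffs_uminus [simp]: "int_coeffs a \<Longrightarrow> int_coeffs (- a)"
  and int_coeffs_add [simp]: "int_coeffs a \<Longrightarrow> int_coeffs b \<Longrightarrow> int_coeffs (a + b)"
  and int_coeffs_diff [simp]: "int_coeffs a \<Longrightarrow> int_coeffs b \<Longrightarrow> int_coeffs (a - b)"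
  by (auto simp: int_coeffs_def)

lemma int_coeffs_mult [simp]:
  "int_coeffs a \<Longrightarrow> int_coeffs b \<Longrightarrow> int_coeffs (a * b :: 'a::comm_ring_1 fps)"
  unfolding int_coeffs_def fps_mult_nth by (auto intro!: Ints_sum)

lemma int_coeffs_power [simp]: "int_coeffs a \<Longrightarrow> int_coeffs (a ^ k :: 'a::comm_ring_1 fps)"
  by (induction k) auto

lemma int_coeffs_prod:
  "(\<And>i. i \<in> S \<Longrightarrow> int_coeffs (f i :: 'a::comm_ring_1 fps)) \<Longrightarrow> int_coeffs (prod f S)"
  by (induction S rule: infinite_finite_induct) auto

lemma int_coeffs_inverse:
  fixes a :: "'a::field fps"
  assumes "int_coeffs a" "a $ 0 = 1"
  shows "int_coeffs (inverse a)"
proof -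
  have "inverse a $ n \<in> \<int>" for n
  proof (induction n rule: less_induct)
    case (less n)
    show ?case
    proof (cases n)
      case 0
      then show ?thesis using assms(2) by simp
    next
      case (Suc k)
      have "(a * inverse a) $ n = 0"
        using assms(2) Suc by (simp add: inverse_mult_eq_1')
      then have "a $ 0 * inverse a $ n + (\<Sum>i=1..n. a $ i * inverse a $ (n - i)) = 0"
        by (simp add: fps_mult_nth sum.atLeast_Suc_atMost)
      then have "inverse a $ n = - (\<Sum>i=1..n. a $ i * inverse a $ (n - i))"
        using assms(2) by (simp add: eq_neg_iff_add_eq_0)
      also have "\<dots> \<in> \<int>"
        using assms(1) less Suc by (intro Ints_minus Ints_sum Ints_mult) (auto simp: int_coeffs_def)
      finally show ?thesis .
    qed
  qed
  then show ?thesis by (simp add: int_coeffs_def)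
qed

definition fps_cong :: "'a::ring_1 \<Rightarrow> 'a fps \<Rightarrow> 'a fps \<Rightarrow> bool" where
  "fps_cong m a b \<longleftrightarrow> int_coeffs a \<and> int_coeffs b \<and> (\<exists>c. int_coeffs c \<and> a = b + fps_const m * c)"

lemma fps_cong_int_coeffs: "fps_cong m a b \<Longrightarrow> int_coeffs a" "fps_cong m a b \<Longrightarrow> int_coeffs b"
  by (auto simp: fps_cong_def)

lemma fps_cong_refl [simp]: "int_coeffs a \<Longrightarrow> fps_cong m a a"
  unfolding fps_cong_def by (auto intro: exI[of _ 0])

lemma fps_cong_sym:
  assumes "fps_cong m a b"
  shows "fps_cong m b a"
proof -
  obtain c where c: "int_coeffs c" "a = b + fps_const m * c"
    using assms by (auto simp: fps_cong_def)
  then have "b = a + fps_const m * (- c)"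
    by simp
  with assms c(1) show ?thesis
    unfolding fps_cong_def by (metis int_coeffs_uminus)
qed

lemma fps_cong_trans [trans]:
  assumes "fps_cong m a b" "fps_cong m b c"
  shows "fps_cong m a c"
proof -
  obtain u v where u: "int_coeffs u" "a = b + fps_const m * u"
    and v: "int_coeffs v" "b = c + fps_const m * v"
    using assms by (auto simp: fps_cong_def)
  then have "a = c + fps_const m * (v + u)"
    by (simp add: algebra_simps)
  with assms u(1) v(1) show ?thesis
    unfolding fps_cong_def by (metis int_coeffs_add)
qed

lemma fps_cong_mult:
  fixes a b c d :: "'a::comm_ring_1 fps"
  assumes "fps_cong m a b" "fps_cong m c d"
  shows "fps_cong m (a * c) (b * d)"
proof -
  obtain u v where u: "int_coeffs u" "a = b + fps_const m * u"
    and v: "int_coeffs v" "c = d + fps_const m * v"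
    using assms by (auto simp: fps_cong_def)
  have "a * c = b * d + fps_const m * (u * c + b * v)"
    unfolding u(2) v(2) by (simp add: algebra_simps)
  moreover have "int_coeffs (u * c + b * v)" "int_coeffs (a * c)" "int_coeffs (b * d)"
    using assms u(1) v(1) by (simp_all add: fps_cong_int_coeffs)
  ultimately show ?thesis
    unfolding fps_cong_def by blast
qed

lemma fps_cong_power:
  fixes a b :: "'a::comm_ring_1 fps"
  assumes "fps_cong m a b"
  shows "fps_cong m (a ^ k) (b ^ k)"
  by (induction k) (simp_all add: fps_cong_mult[OF assms])

lemma fps_cong_coeff:
  fixes a b :: "'a::field fps"
  assumes "fps_cong m a b" "m \<noteq> 0"
  shows "(a $ n - b $ n) / m \<in> \<int>"
proof -
  obtain c where "int_coeffs c" "a = b + fps_const m * c"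
    using assms(1) by (auto simp: fps_cong_def)
  then show ?thesis
    using assms(2) by (simp add: int_coeffs_def)
qed

lemma fps_congI_coeff:
  fixes a b :: "'a::field fps"
  assumes "int_coeffs a" "int_coeffs b" "m \<noteq> 0" "\<And>n. (a $ n - b $ n) / m \<in> \<int>"
  shows "fps_cong m a b"
  unfolding fps_cong_def
proof (intro conjI assms(1,2) exI)
  let ?c = "Abs_fps (\<lambda>n. (a $ n - b $ n) / m)"
  show "int_coeffs ?c"
    using assms(4) by (simp add: int_coeffs_def)
  show "a = b + fps_const m * ?c"
    using assms(3) by (simp add: fps_eq_iff)
qed

lemma fps_cong_cancel:
  fixes a b u :: "'a::field fps"
  assumes "fps_cong m (a * u) (b * u)" "int_coeffs a" "int_coeffs b" "int_coeffs u" "u $ 0 = 1"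
  shows "fps_cong m a b"
proof -
  have "fps_cong m (a * u * inverse u) (b * u * inverse u)"
    by (rule fps_cong_mult[OF assms(1) fps_cong_refl[OF int_coeffs_inverse[OF assms(4,5)]]])
  then show ?thesis
    using assms(5) by (simp add: mult.assoc inverse_mult_eq_1')
qed

lemma fps_cong_power4:
  fixes a b :: "'a::comm_ring_1 fps"
  assumes "fps_cong 2 a b"
  shows "fps_cong 8 (a ^ 4) (b ^ 4)"
proof -
  obtain c where c: "int_coeffs c" "a = b + 2 * c"
    using assms by (auto simp: fps_cong_def numeral_fps_const)
  define d where "d = b^3 * c + 3 * b^2 * c^2 + 4 * b * c^3 + 2 * c^4"
  have "a ^ 4 = b ^ 4 + 8 * d"
    unfolding c(2) d_def by (simp add: power4_eq_xxxx power3_eq_cube power2_eq_square algebra_simps)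
  then have "a ^ 4 = b ^ 4 + fps_const 8 * d"
    by (simp add: numeral_fps_const)
  moreover have "int_coeffs d" "int_coeffs (a ^ 4)" "int_coeffs (b ^ 4)"
    using assms c(1) by (simp_all add: d_def fps_cong_int_coeffs)
  ultimately show ?thesis
    unfolding fps_cong_def by blast
qed

section \<open>Dilation and parity of power series\<close>

definition fps_dilate :: "nat \<Rightarrow> 'a::comm_semiring_1 fps \<Rightarrow> 'a fps" where
  "fps_dilate r a = a oo fps_X ^ r"

lemma fps_dilate_nth:
  assumes "r > 0"
  shows "fps_dilate r a $ n = (if r dvd n then a $ (n div r) else 0)"
proof -
  have "fps_dilate r a $ n = (\<Sum>i=0..n. if i = n div r \<and> r dvd n then a $ i else 0)"
    unfolding fps_dilate_def fps_compose_nth using assms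
    by (intro sum.cong) (auto simp: power_mult[symmetric])
  also have "\<dots> = (if r dvd n then a $ (n div r) else 0)"
    by (simp add: sum.delta')
  finally show ?thesis .
qed

lemma fps_dilate_nth_0 [simp]: "fps_dilate r a $ 0 = a $ 0"
  by (simp add: fps_dilate_def)

lemma fps_dilate_1 [simp]: "fps_dilate r (1 :: 'a::comm_ring_1 fps) = 1"
  and fps_dilate_fps_const [simp]: "fps_dilate r (fps_const (c :: 'a::comm_ring_1)) = fps_const c"
  by (simp_all add: fps_dilate_def)

lemma fps_dilate_add: "fps_dilate r (a + b) = fps_dilate r a + fps_dilate r b"
  unfolding fps_dilate_def by (rule fps_compose_add_distrib)

lemma fps_dilate_diff: "fps_dilate r (a - b :: 'a::comm_ring_1 fps) = fps_dilate r a - fps_dilate r b"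
  unfolding fps_dilate_def by (rule fps_compose_sub_distrib)

lemma fps_dilate_mult: "r > 0 \<Longrightarrow> fps_dilate r (a * b :: 'a::idom fps) = fps_dilate r a * fps_dilate r b"
  unfolding fps_dilate_def by (rule fps_compose_mult_distrib) simp

lemma fps_dilate_power: "r > 0 \<Longrightarrow> fps_dilate r (a ^ k :: 'a::idom fps) = fps_dilate r a ^ k"
  unfolding fps_dilate_def by (rule fps_compose_power[symmetric]) simp

lemma fps_dilate_prod:
  "r > 0 \<Longrightarrow> fps_dilate r (prod f S :: 'a::idom fps) = (\<Prod>i\<in>S. fps_dilate r (f i))"
  unfolding fps_dilate_def by (rule fps_compose_prod_distrib) simp

lemma fps_dilate_X_power: "r > 0 \<Longrightarrow> fps_dilate r (fps_X ^ k :: 'a::idom fps) = fps_X ^ (r * k)"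
  unfolding fps_dilate_def by (subst fps_X_power_compose) (simp_all add: power_mult)

lemma fps_dilate_X: "r > 0 \<Longrightarrow> fps_dilate r (fps_X :: 'a::idom fps) = fps_X ^ r"
  using fps_dilate_X_power[of r 1] by simp

lemma fps_dilate_inverse:
  "r > 0 \<Longrightarrow> a $ 0 \<noteq> 0 \<Longrightarrow> fps_dilate r (inverse a :: 'a::field fps) = inverse (fps_dilate r a)"
  unfolding fps_dilate_def by (rule fps_inverse_compose) simp_all

lemma fps_dilate_dilate:
  assumes "r > 0" "s > 0"
  shows "fps_dilate r (fps_dilate s a :: 'a::idom fps) = fps_dilate (s * r) a"
proof -
  have "fps_dilate r (fps_dilate s a) = a oo (fps_X ^ s oo fps_X ^ r)"
    unfolding fps_dilate_def using assms by (subst fps_compose_assoc) simp_all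
  also have "\<dots> = fps_dilate (s * r) a"
    unfolding fps_dilate_def using assms
    by (subst fps_X_power_compose) (simp_all add: power_mult mult.commute)
  finally show ?thesis .
qed

lemma int_coeffs_dilate [simp]: "r > 0 \<Longrightarrow> int_coeffs a \<Longrightarrow> int_coeffs (fps_dilate r a)"
  by (auto simp: int_coeffs_def fps_dilate_nth)

lemma fps_cong_dilate:
  fixes a b :: "'a::idom fps"
  assumes "r > 0" "fps_cong m a b"
  shows "fps_cong m (fps_dilate r a) (fps_dilate r b)"
proof -
  obtain c where "int_coeffs c" "a = b + fps_const m * c"
    using assms(2) by (auto simp: fps_cong_def)
  then have "int_coeffs (fps_dilate r c)"
    and "fps_dilate r a = fps_dilate r b + fps_const m * fps_dilate r c"
    using assms(1) by (simp_all add: fps_dilate_add fps_dilate_mult)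
  with assms show ?thesis
    unfolding fps_cong_def by (metis int_coeffs_dilate)
qed

lemma Ints_square_minus_self_half:
  assumes "(x::'a::field_char_0) \<in> \<int>"
  shows "(x * x - x) / 2 \<in> \<int>"
proof -
  obtain z where z: "x = of_int z"
    using assms by (elim Ints_cases)
  have "2 dvd z * z - z"
    by simp
  then have "of_int (z * z - z) / of_int 2 \<in> (\<int> :: 'a set)"
    by (rule of_int_divide_in_Ints)
  then show ?thesis
    by (simp add: z)
qed

text \<open>In the square of an integral series the products \<open>a(i) a(n - i)\<close> and \<open>a(n - i) a(i)\<close> pair up,
  leaving only the middle term \<open>a(n/2)\<^sup>2\<close>, which is congruent to \<open>a(n/2)\<close> modulo 2.\<close>
lemma Ints_convolution_square_half:
  fixes f :: "nat \<Rightarrow> 'a::field_char_0"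
  assumes "\<And>i. f i \<in> \<int>"
  shows "((\<Sum>i=0..n. f i * f (n - i)) - (if even n then f (n div 2) else 0)) / 2 \<in> \<int>"
proof -
  let ?g = "\<lambda>i. f i * f (n - i)"
  define L where "L = {i. 2 * i < n}"
  define R where "R = {i. n < 2 * i \<and> i \<le> n}"
  define M where "M = {i. 2 * i = n}"
  have fin: "finite L" "finite R" "finite M"
    unfolding L_def R_def M_def by (auto intro: finite_subset[of _ "{0..n}"])
  have "{0..n} = L \<union> R \<union> M" "L \<inter> R = {}" "(L \<union> R) \<inter> M = {}"
    unfolding L_def R_def M_def by auto
  then have "sum ?g {0..n} = sum ?g L + sum ?g R + sum ?g M"
    using fin by (simp add: sum.union_disjoint)
  moreover have "sum ?g R = sum ?g L"
    by (rule sum.reindex_bij_witness[of _ "\<lambda>i. n - i" "\<lambda>i. n - i"])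
      (auto simp: L_def R_def mult.commute)
  moreover have "sum ?g M = (if even n then f (n div 2) * f (n div 2) else 0)"
  proof (cases "even n")
    case True
    then have "M = {n div 2}" "n - n div 2 = n div 2"
      unfolding M_def by auto
    then show ?thesis using True by simp
  next
    case False
    then have "M = {}" unfolding M_def by auto
    then show ?thesis using False by simp
  qed
  ultimately have "((\<Sum>i=0..n. ?g i) - (if even n then f (n div 2) else 0)) / 2
      = sum ?g L + (if even n then f (n div 2) * f (n div 2) - f (n div 2) else 0) / 2"
    by (simp add: field_simps)
  also have "\<dots> \<in> \<int>"
    using assms Ints_square_minus_self_half[OF assms[of "n div 2"]] by auto
  finally show ?thesis .
qed

lemma fps_cong_square_dilate:
  fixes a :: "'a::field_char_0 fps"
  assumes "int_coeffs a"
  shows "fps_cong 2 (a ^ 2) (fps_dilate 2 a)"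
proof (rule fps_congI_coeff)
  fix n
  have "(a ^ 2) $ n = (\<Sum>i=0..n. a $ i * a $ (n - i))"
    by (simp add: power2_eq_square fps_mult_nth)
  moreover have "fps_dilate 2 a $ n = (if even n then a $ (n div 2) else 0)"
    by (simp add: fps_dilate_nth)
  ultimately show "((a ^ 2) $ n - fps_dilate 2 a $ n) / 2 \<in> \<int>"
    using Ints_convolution_square_half[of "\<lambda>i. a $ i" n] assms by (simp add: int_coeffs_def)
qed (use assms in simp_all)

lemma fps_cong_power4_dilate:
  fixes a :: "'a::field_char_0 fps"
  assumes "int_coeffs a"
  shows "fps_cong 2 (a ^ 4) (fps_dilate 4 a)"
proof -
  have "fps_cong 2 ((a ^ 2) ^ 2) ((fps_dilate 2 a) ^ 2)"
    by (rule fps_cong_power[OF fps_cong_square_dilate[OF assms]])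
  also have "fps_cong 2 \<dots> (fps_dilate 2 (fps_dilate 2 a))"
    by (rule fps_cong_square_dilate) (simp add: assms)
  finally show ?thesis
    by (simp add: fps_dilate_dilate flip: power_mult)
qed

definition fps_even :: "'a::zero fps \<Rightarrow> bool" where
  "fps_even a \<longleftrightarrow> (\<forall>n. odd n \<longrightarrow> a $ n = 0)"

definition fps_odd :: "'a::zero fps \<Rightarrow> bool" where
  "fps_odd a \<longleftrightarrow> (\<forall>n. even n \<longrightarrow> a $ n = 0)"

definition fps_even_part :: "'a::zero fps \<Rightarrow> 'a fps" where
  "fps_even_part a = Abs_fps (\<lambda>n. if even n then a $ n else 0)"

definition fps_odd_part :: "'a::zero fps \<Rightarrow> 'a fps" where
  "fps_odd_part a = Abs_fps (\<lambda>n. if odd n then a $ n else 0)"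

lemma fps_even_part_add_odd_part: "fps_even_part a + fps_odd_part a = (a :: 'a::monoid_add fps)"
  by (simp add: fps_eq_iff fps_even_part_def fps_odd_part_def)

lemma fps_even_fps_even_part [simp]: "fps_even (fps_even_part a)"
  and fps_odd_fps_odd_part [simp]: "fps_odd (fps_odd_part a)"
  by (simp_all add: fps_even_def fps_even_part_def fps_odd_def fps_odd_part_def)

lemma fps_even_part_eq: "fps_even a \<Longrightarrow> fps_odd b \<Longrightarrow> fps_even_part (a + b :: 'a::monoid_add fps) = a"
  and fps_odd_part_eq: "fps_even a \<Longrightarrow> fps_odd b \<Longrightarrow> fps_odd_part (a + b :: 'a::monoid_add fps) = b"
  by (auto simp: fps_eq_iff fps_even_part_def fps_odd_part_def fps_even_def fps_odd_def)

lemma fps_even_part_add: "fps_even_part (a + b :: 'a::monoid_add fps) = fps_even_part a + fps_even_part b"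
  and fps_odd_part_add: "fps_odd_part (a + b :: 'a::monoid_add fps) = fps_odd_part a + fps_odd_part b"
  by (simp_all add: fps_eq_iff fps_even_part_def fps_odd_part_def)

lemma fps_even_part_const_mult:
    "fps_even_part (fps_const c * a :: 'a::semiring_0 fps) = fps_const c * fps_even_part a"
  and fps_odd_part_const_mult:
    "fps_odd_part (fps_const c * a :: 'a::semiring_0 fps) = fps_const c * fps_odd_part a"
  by (simp_all add: fps_eq_iff fps_even_part_def fps_odd_part_def)

lemma int_coeffs_fps_even_part [simp]: "int_coeffs a \<Longrightarrow> int_coeffs (fps_even_part a)"
  and int_coeffs_fps_odd_part [simp]: "int_coeffs a \<Longrightarrow> int_coeffs (fps_odd_part a)"
  by (simp_all add: int_coeffs_def fps_even_part_def fps_odd_part_def)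

lemma fps_cong_fps_even_part: "fps_cong m a b \<Longrightarrow> fps_cong m (fps_even_part a) (fps_even_part b)"
  and fps_cong_fps_odd_part: "fps_cong m a b \<Longrightarrow> fps_cong m (fps_odd_part a) (fps_odd_part b)"
  unfolding fps_cong_def
  by (auto simp: fps_even_part_add fps_odd_part_add fps_even_part_const_mult fps_odd_part_const_mult
           intro: int_coeffs_fps_even_part int_coeffs_fps_odd_part)

lemma fps_cong_even_odd_part_squares:
  fixes d :: "'a::field_char_0 fps"
  assumes "int_coeffs d"
  shows "fps_cong 2 (fps_even_part d ^ 2 + fps_odd_part d ^ 2) (fps_dilate 2 d)"
proof -
  let ?d0 = "fps_even_part d" and ?d1 = "fps_odd_part d"
  have "d ^ 2 = (?d0 ^ 2 + ?d1 ^ 2) + fps_const 2 * (?d0 * ?d1)"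
    by (subst (1) fps_even_part_add_odd_part[of d, symmetric])
      (simp add: power2_eq_square algebra_simps numeral_fps_const)
  moreover have "int_coeffs (d ^ 2)" "int_coeffs (?d0 ^ 2 + ?d1 ^ 2)" "int_coeffs (?d0 * ?d1)"
    using assms by simp_all
  ultimately have "fps_cong 2 (d ^ 2) (?d0 ^ 2 + ?d1 ^ 2)"
    unfolding fps_cong_def by blast
  then show ?thesis
    by (rule fps_cong_trans[OF fps_cong_sym fps_cong_square_dilate[OF assms]])
qed

lemma fps_even_mult:
  assumes "fps_even a" "fps_even b"
  shows "fps_even (a * b :: 'a::semiring_0 fps)"
  unfolding fps_even_def fps_mult_nth
proof (intro allI impI sum.neutral ballI)
  fix n i :: nat assume "odd n" "i \<in> {0..n}"
  then have "odd (i + (n - i))"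
    by simp
  then have "odd i \<or> odd (n - i)"
    unfolding even_add by blast
  with assms show "a $ i * b $ (n - i) = 0"
    unfolding fps_even_def by (metis mult_zero_left mult_zero_right)
qed

lemma fps_odd_mult:
  assumes "fps_odd a" "fps_odd b"
  shows "fps_even (a * b :: 'a::semiring_0 fps)"
  unfolding fps_even_def fps_mult_nth
proof (intro allI impI sum.neutral ballI)
  fix n i :: nat assume "odd n" "i \<in> {0..n}"
  then have "odd (i + (n - i))"
    by simp
  then have "even i \<or> even (n - i)"
    unfolding even_add by blast
  with assms show "a $ i * b $ (n - i) = 0"
    unfolding fps_odd_def by (metis mult_zero_left mult_zero_right)
qed

lemma fps_even_add: "fps_even a \<Longrightarrow> fps_even b \<Longrightarrow> fps_even (a + b :: 'a::monoid_add fps)"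
  by (simp add: fps_even_def)

lemma fps_even_1 [simp]: "fps_even (1 :: 'a::semiring_1 fps)"
  and fps_even_numeral [simp]: "fps_even (numeral k :: 'a::semiring_1 fps)"
  by (simp_all add: fps_even_def numeral_fps_const)

lemma fps_even_power: "fps_even a \<Longrightarrow> fps_even (a ^ k :: 'a::semiring_1 fps)"
  by (induction k) (simp_all add: fps_even_mult)

lemma fps_even_dilate: "0 < r \<Longrightarrow> even r \<Longrightarrow> fps_even (fps_dilate r a)"
  by (auto simp: fps_even_def fps_dilate_nth)

lemma fps_odd_X_mult:
  assumes "fps_even b"
  shows "fps_odd (fps_X * b :: 'a::semiring_1 fps)"
  unfolding fps_odd_def
proof (intro allI impI)
  fix n :: nat assume "even n"
  then show "(fps_X * b) $ n = 0"
    using assms by (cases n) (auto simp: fps_even_def)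
qed

lemma fps_power4_odd_nth:
  fixes d w :: "'a::comm_ring_1 fps"
  defines "ev \<equiv> fps_even_part d" and "od \<equiv> fps_odd_part d"
  assumes "fps_even w" "odd n"
  shows "((d * w) ^ 4) $ n = 4 * (w ^ 4 * ev * od * (ev ^ 2 + od ^ 2)) $ n"
proof -
  have "d = ev + od"
    by (simp add: ev_def od_def fps_even_part_add_odd_part)
  then have "(d * w) ^ 4 = w ^ 4 * (ev ^ 4 + 6 * ev ^ 2 * od ^ 2 + od ^ 4)
      + 4 * (w ^ 4 * ev * od * (ev ^ 2 + od ^ 2))"
    by (simp add: power2_eq_square power4_eq_xxxx algebra_simps)
  moreover have "fps_even (w ^ 4 * (ev ^ 4 + 6 * ev ^ 2 * od ^ 2 + od ^ 4))"
  proof -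
    have "fps_even (od ^ 2)"
      unfolding power2_eq_square by (rule fps_odd_mult) (simp_all add: od_def)
    moreover from this have "fps_even (od ^ 4)"
      using fps_even_power[of "od ^ 2" 2] by (simp flip: power_mult)
    moreover have "fps_even ev"
      by (simp add: ev_def)
    ultimately show ?thesis
      using assms(3) by (simp add: fps_even_mult fps_even_add fps_even_power)
  qed
  ultimately show ?thesis
    using assms(4) by (simp add: fps_even_def numeral_fps_const)
qed

section \<open>The Euler function and Gaussian binomial coefficients\<close>

definition qpoch :: "nat \<Rightarrow> rat fps" where
  "qpoch k = (\<Prod>i\<in>{1..k}. 1 - fps_X ^ i)"

lemma qpoch_0 [simp]: "qpoch 0 = 1"
  by (simp add: qpoch_def)

lemma qpoch_Suc: "qpoch (Suc k) = qpoch k * (1 - fps_X ^ Suc k)"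
  by (simp add: qpoch_def)

lemma qpoch_nth_0 [simp]: "qpoch k $ 0 = 1"
  by (induction k) (simp_all add: qpoch_Suc)

lemma qpoch_mult_inverse: "qpoch k * inverse (qpoch k) = 1"
  by (simp add: inverse_mult_eq_1')

lemma f_trunc_eq_dilate_qpoch: "r > 0 \<Longrightarrow> f_trunc N r = fps_dilate r (qpoch N)"
  unfolding f_trunc_def qpoch_def by (simp add: fps_dilate_prod fps_dilate_diff fps_dilate_X_power)

lemma f_trunc_nth_0 [simp]: "r > 0 \<Longrightarrow> f_trunc N r $ 0 = 1"
  by (simp add: f_trunc_eq_dilate_qpoch)

lemma int_coeffs_qpoch [simp]: "int_coeffs (qpoch k)"
  unfolding qpoch_def by (intro int_coeffs_prod) simp

lemma qpoch_agree:
  assumes "M \<le> N"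
  shows "fps_agree (M + 1) (qpoch N) (qpoch M)"
proof -
  have "qpoch N = qpoch M * (\<Prod>i\<in>{M+1..M+(N-M)}. 1 - fps_X ^ i)"
    unfolding qpoch_def using assms prod.ub_add_nat[of 1 M "\<lambda>i. 1 - fps_X ^ i :: rat fps" "N - M"]
    by simp
  moreover have "fps_agree (M + 1) (\<Prod>i\<in>{M+1..M+(N-M)}. 1 - fps_X ^ i :: rat fps) (\<Prod>i\<in>{M+1..M+(N-M)}. 1)"
    using fps_agree_X_power_mult[of "M + 1" _ 1]
    by (intro fps_agree_prod) (auto intro: fps_agree_diff[of _ 1 1 _ 0, simplified])
  ultimately show ?thesis
    using fps_agree_mult[OF fps_agree_refl[of "M + 1" "qpoch M"]] by fastforce
qed

text \<open>The Euler function \<open>f(q) = (1 - q)(1 - q\<^sup>2)(1 - q\<^sup>3)\<dots>\<close>: its coefficient of \<open>q\<^sup>n\<close> is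
  already that of the product truncated after the factor \<open>1 - q\<^sup>n\<close>.\<close>
definition euler_fps :: "rat fps" where
  "euler_fps = Abs_fps (\<lambda>n. qpoch n $ n)"

lemma qpoch_agree_euler: "fps_agree (N + 1) (qpoch N) euler_fps"
  unfolding fps_agree_def
proof (intro allI impI)
  fix i assume "i < N + 1"
  then have "fps_agree (i + 1) (qpoch N) (qpoch i)"
    by (intro qpoch_agree) simp
  then show "qpoch N $ i = euler_fps $ i"
    by (simp add: fps_agree_def euler_fps_def)
qed

lemma int_coeffs_euler [simp]: "int_coeffs euler_fps"
  using int_coeffs_qpoch by (simp add: int_coeffs_def euler_fps_def)

lemma euler_fps_nth_0 [simp]: "euler_fps $ 0 = 1"
  by (simp add: euler_fps_def)

lemma f_trunc_agree_dilate_euler: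
  assumes "r > 0"
  shows "fps_agree (N + 1) (f_trunc N r) (fps_dilate r euler_fps)"
  unfolding fps_agree_def
proof (intro allI impI)
  fix i assume i: "i < N + 1"
  show "f_trunc N r $ i = fps_dilate r euler_fps $ i"
  proof (cases "r dvd i")
    case True
    have "i div r < N + 1"
      using i by (meson div_le_dividend le_less_trans)
    then show ?thesis
      using qpoch_agree_euler[of N] True assms
      by (simp add: f_trunc_eq_dilate_qpoch fps_dilate_nth fps_agree_def)
  qed (simp add: f_trunc_eq_dilate_qpoch fps_dilate_nth assms)
qed

definition qbinomial :: "nat \<Rightarrow> nat \<Rightarrow> rat fps" where
  "qbinomial m k =
     (if k \<le> m then qpoch m * inverse (qpoch k) * inverse (qpoch (m - k)) else 0)"

lemma qbinomial_0 [simp]: "qbinomial m 0 = 1"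
  and qbinomial_diag [simp]: "qbinomial m m = 1"
  by (simp_all add: qbinomial_def qpoch_mult_inverse)

lemma qbinomial_eq_0: "m < k \<Longrightarrow> qbinomial m k = 0"
  by (simp add: qbinomial_def)

lemma qbinomial_mult_qpoch:
  "k \<le> m \<Longrightarrow> qbinomial m k * qpoch k * qpoch (m - k) = qpoch m"
  unfolding qbinomial_def
  by (simp add: mult.assoc mult.left_commute[of "inverse (qpoch k)"] inverse_mult_eq_1)

lemma inverse_qpoch_Suc:
  "inverse (qpoch k) = inverse (qpoch (Suc k)) * (1 - fps_X ^ Suc k)"
proof -
  have "inverse (qpoch (Suc k)) = inverse (qpoch k) * inverse (1 - fps_X ^ Suc k)"
    by (simp add: qpoch_Suc fps_inverse_mult)
  moreover have "inverse (1 - fps_X ^ Suc k :: rat fps) * (1 - fps_X ^ Suc k) = 1"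
    by (simp add: inverse_mult_eq_1)
  ultimately show ?thesis
    by (simp add: mult.assoc)
qed

lemma qbinomial_Suc_Suc:
  assumes "k \<le> m"
  shows "qbinomial (Suc m) (Suc k) = qbinomial m (Suc k) + fps_X ^ (m - k) * qbinomial m k"
proof (cases "k = m")
  case True
  then show ?thesis by (simp add: qbinomial_eq_0)
next
  case False
  then have km: "Suc k \<le> m"
    using assms by simp
  define A where "A = inverse (qpoch (Suc k))"
  define B where "B = inverse (qpoch (m - k))"
  have iB: "inverse (qpoch (m - Suc k)) = B * (1 - fps_X ^ (m - k))"
    using inverse_qpoch_Suc[of "m - Suc k"] km unfolding B_def by (simp add: Suc_diff_Suc)
  have iA: "inverse (qpoch k) = A * (1 - fps_X ^ Suc k)"
    using inverse_qpoch_Suc[of k] unfolding A_def by simp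
  have "qbinomial m (Suc k) + fps_X ^ (m - k) * qbinomial m k
      = qpoch m * A * (B * (1 - fps_X ^ (m - k)))
        + fps_X ^ (m - k) * (qpoch m * (A * (1 - fps_X ^ Suc k)) * B)"
    using km assms by (simp add: qbinomial_def iB iA A_def B_def)
  also have "\<dots> = qpoch m * A * B * ((1 - fps_X ^ (m - k)) + fps_X ^ (m - k) * (1 - fps_X ^ Suc k))"
    by (simp add: algebra_simps)
  also have "(1 - fps_X ^ (m - k)) + fps_X ^ (m - k) * (1 - fps_X ^ Suc k) = (1 - fps_X ^ Suc m :: rat fps)"
    using km by (simp add: algebra_simps flip: power_add)
  also have "qpoch m * A * B * (1 - fps_X ^ Suc m) = qpoch (Suc m) * A * B"
    by (simp add: qpoch_Suc algebra_simps)
  also have "\<dots> = qbinomial (Suc m) (Suc k)"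
    using km by (simp add: qbinomial_def A_def B_def)
  finally show ?thesis ..
qed

lemma qbinomial_exponent_Suc:
  assumes "k \<le> m"
  shows "k * (k - 1) div 2 + a * (m - k) + a = k * (k - 1) div 2 + a * (Suc m - k)"
    and "k * (k - 1) div 2 + a * (m - k) + m = (m - k) + (Suc k * k div 2 + a * (m - k))"
proof -
  show "k * (k - 1) div 2 + a * (m - k) + a = k * (k - 1) div 2 + a * (Suc m - k)"
    using assms by (simp add: Suc_diff_le)
  have "Suc k * k = k * (k - 1) + 2 * k"
    by (cases k) (simp_all add: algebra_simps)
  then show "k * (k - 1) div 2 + a * (m - k) + m = (m - k) + (Suc k * k div 2 + a * (m - k))"
    using assms by simp
qed

lemma qbinomial_theorem:
  "(\<Prod>i<m. fps_X ^ a + fps_X ^ i :: rat fps)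
     = (\<Sum>k=0..m. qbinomial m k * fps_X ^ (k * (k - 1) div 2 + a * (m - k)))"
proof (induction m)
  case 0
  then show ?case by simp
next
  case (Suc m)
  define e where "e = (\<lambda>m k. k * (k - 1) div 2 + a * (m - k))"
  have e_Suc: "e m k + a = e (Suc m) k" and e_Suc_Suc: "e m k + m = (m - k) + e (Suc m) (Suc k)"
    if "k \<le> m" for k
    using qbinomial_exponent_Suc[OF that] unfolding e_def by simp_all
  have "(\<Prod>i<Suc m. fps_X ^ a + fps_X ^ i :: rat fps)
      = (\<Sum>k=0..m. qbinomial m k * fps_X ^ (e m k + a))
        + (\<Sum>k=0..m. qbinomial m k * fps_X ^ (e m k + m))"
  proof -
    have "(\<Prod>i<Suc m. fps_X ^ a + fps_X ^ i :: rat fps)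
        = (\<Sum>k=0..m. qbinomial m k * fps_X ^ e m k) * (fps_X ^ a + fps_X ^ m)"
      using Suc by (simp add: e_def)
    then show ?thesis
      by (simp add: sum_distrib_right distrib_left sum.distrib power_add mult.assoc)
  qed
  also have "(\<Sum>k=0..m. qbinomial m k * fps_X ^ (e m k + a)) = (\<Sum>k=0..m. qbinomial m k * fps_X ^ e (Suc m) k)"
    by (intro sum.cong) (simp_all add: e_Suc)
  also have "\<dots> = (\<Sum>k=0..Suc m. qbinomial m k * fps_X ^ e (Suc m) k)"
    by (simp add: qbinomial_eq_0)
  also have "\<dots> = fps_X ^ e (Suc m) 0 + (\<Sum>k=0..m. qbinomial m (Suc k) * fps_X ^ e (Suc m) (Suc k))"
    by (simp only: sum.atLeast0_atMost_Suc_shift qbinomial_0 mult_1_left o_def)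
  also have "(\<Sum>k=0..m. qbinomial m k * fps_X ^ (e m k + m))
      = (\<Sum>k=0..m. fps_X ^ (m - k) * qbinomial m k * fps_X ^ e (Suc m) (Suc k))"
  proof (intro sum.cong refl)
    fix k assume "k \<in> {0..m}"
    then have "(fps_X :: rat fps) ^ (e m k + m) = fps_X ^ (m - k) * fps_X ^ e (Suc m) (Suc k)"
      by (simp only: e_Suc_Suc power_add atLeastAtMost_iff)
    then show "qbinomial m k * fps_X ^ (e m k + m) = fps_X ^ (m - k) * qbinomial m k * fps_X ^ e (Suc m) (Suc k)"
      by (simp add: mult.commute mult.left_commute)
  qed
  finally have "(\<Prod>i<Suc m. fps_X ^ a + fps_X ^ i :: rat fps) = fps_X ^ e (Suc m) 0 +
      (\<Sum>k=0..m. (qbinomial m (Suc k) + fps_X ^ (m - k) * qbinomial m k) * fps_X ^ e (Suc m) (Suc k))"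
    by (simp add: sum.distrib distrib_right add.assoc)
  also have "\<dots> = fps_X ^ e (Suc m) 0 + (\<Sum>k=0..m. qbinomial (Suc m) (Suc k) * fps_X ^ e (Suc m) (Suc k))"
    by (simp add: qbinomial_Suc_Suc)
  also have "\<dots> = (\<Sum>k=0..Suc m. qbinomial (Suc m) k * fps_X ^ e (Suc m) k)"
    by (simp only: sum.atLeast0_atMost_Suc_shift qbinomial_0 mult_1_left o_def)
  finally show ?case
    by (simp add: e_def)
qed

lemma qbinomial_agree_inverse_euler:
  assumes "k \<le> m"
  shows "fps_agree (min k (m - k) + 1) (qbinomial m k * euler_fps) 1"
proof -
  let ?L = "min k (m - k) + 1"
  have "fps_agree ?L euler_fps (qpoch k)" "fps_agree ?L euler_fps (qpoch (m - k))"
    and m: "fps_agree ?L (qpoch m) euler_fps"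
    by (rule fps_agree_mono[OF qpoch_agree_euler] fps_agree_sym; simp)+
  then have "fps_agree ?L (qbinomial m k * euler_fps * euler_fps)
      (qbinomial m k * qpoch k * qpoch (m - k))"
    by (intro fps_agree_mult fps_agree_refl)
  also have "qbinomial m k * qpoch k * qpoch (m - k) = qpoch m"
    by (rule qbinomial_mult_qpoch[OF assms])
  also note m
  finally have "fps_agree ?L (qbinomial m k * euler_fps * euler_fps) euler_fps" .
  then have "fps_agree ?L (qbinomial m k * euler_fps * euler_fps * inverse euler_fps)
      (euler_fps * inverse euler_fps)"
    by (intro fps_agree_mult fps_agree_refl)
  then show ?thesis
    by (simp add: mult.assoc inverse_mult_eq_1')
qed

section \<open>Gauss's identity for \<open>\<psi>\<close>\<close>

definition tri :: "nat \<Rightarrow> nat" where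
  "tri j = j * (j + 1) div 2"

lemma two_mult_tri: "2 * tri j = j * (j + 1)"
  by (simp add: tri_def)

lemma tri_Suc: "tri (Suc j) = tri j + Suc j"
  using two_mult_tri[of j] two_mult_tri[of "Suc j"] by simp

lemma strict_mono_tri: "strict_mono tri"
  by (rule strict_mono_Suc_iff[THEN iffD2]) (simp add: tri_Suc)

lemma tri_eq_iff [simp]: "tri i = tri j \<longleftrightarrow> i = j"
  using strict_mono_eq[OF strict_mono_tri] .

lemma le_tri: "j \<le> tri j"
  by (induction j) (simp_all add: tri_Suc tri_def)

definition psi_fps :: "rat fps" where
  "psi_fps = Abs_fps (\<lambda>n. if n \<in> range tri then 1 else 0)"

lemma int_coeffs_psi [simp]: "int_coeffs psi_fps"
  by (simp add: int_coeffs_def psi_fps_def)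

lemma psi_fps_nth_0 [simp]: "psi_fps $ 0 = 1"
  by (simp add: psi_fps_def image_iff) (metis tri_def mult_0 div_0)

lemma sum_X_power_tri_agree_psi:
  assumes "N \<le> n"
  shows "fps_agree N (\<Sum>j<n. fps_X ^ tri j) psi_fps"
  unfolding fps_agree_def
proof (intro allI impI)
  fix i assume i: "i < N"
  have "(\<Sum>j<n. fps_X ^ tri j :: rat fps) $ i = (\<Sum>j<n. if i = tri j then 1 else 0)"
    by (simp add: fps_sum_nth)
  also have "\<dots> = (if i \<in> range tri then 1 else 0)"
  proof (cases "i \<in> range tri")
    case True
    then obtain j0 where j0: "i = tri j0"
      by blast
    have "j0 < n"
      using le_tri[of j0] j0 i assms by simp
    have "(\<Sum>j<n. if i = tri j then 1 else 0 :: rat) = (\<Sum>j<n. if j = j0 then 1 else 0)"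
      by (intro sum.cong refl) (auto simp: j0)
    then show ?thesis
      using True \<open>j0 < n\<close> by simp
  qed (auto intro!: sum.neutral)
  finally show "(\<Sum>j<n. fps_X ^ tri j) $ i = psi_fps $ i"
    by (simp add: psi_fps_def)
qed

definition qpoch_neg :: "nat \<Rightarrow> rat fps" where
  "qpoch_neg j = (\<Prod>i\<in>{1..j}. 1 + fps_X ^ i)"

lemma qpoch_neg_conv_lessThan: "qpoch_neg j = (\<Prod>i<j. 1 + fps_X ^ Suc i)"
  unfolding qpoch_neg_def using prod.atLeast1_atMost_eq[of "\<lambda>i. 1 + fps_X ^ i :: rat fps" j] by simp

lemma qpoch_neg_mult_qpoch: "qpoch_neg j * qpoch j = f_trunc j 2"
  unfolding qpoch_neg_def qpoch_def f_trunc_def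
proof (subst prod.distrib[symmetric], intro prod.cong refl)
  fix i
  show "(1 + fps_X ^ i) * (1 - fps_X ^ i) = (1 - fps_X ^ (2 * i) :: rat fps)"
    by (simp add: algebra_simps power_mult_distrib flip: power_add mult_2)
qed

lemma qpoch_neg_agree: "fps_agree (j + 1) (qpoch_neg j * euler_fps) (fps_dilate 2 euler_fps)"
proof -
  have "fps_agree (j + 1) (qpoch_neg j * euler_fps) (qpoch_neg j * qpoch j)"
    by (intro fps_agree_mult fps_agree_refl fps_agree_sym[OF qpoch_agree_euler])
  also have "qpoch_neg j * qpoch j = f_trunc j 2"
    by (rule qpoch_neg_mult_qpoch)
  also have "fps_agree (j + 1) \<dots> (fps_dilate 2 euler_fps)"
    by (rule f_trunc_agree_dilate_euler) simp
  finally show ?thesis .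
qed

lemma prod_X_power_add_X_power:
  "(\<Prod>i<2*r+2. fps_X ^ r + fps_X ^ i :: rat fps) = 2 * fps_X ^ (3 * tri r) * qpoch_neg r * qpoch_neg (Suc r)"
proof -
  let ?f = "\<lambda>i. fps_X ^ r + fps_X ^ i :: rat fps"
  have "(\<Prod>i<2*r+2. ?f i) = prod ?f {0..<r} * prod ?f {r..<2*r+2}"
    by (simp add: prod.atLeastLessThan_concat atLeast0LessThan[symmetric])
  also have "prod ?f {r..<2*r+2} = prod ?f {0+r..<(r+2)+r}"
    by (rule arg_cong[where f="prod ?f"]) (simp add: mult_2)
  also have "\<dots> = (\<Prod>j\<in>{0..<r+2}. ?f (j + r))"
    by (rule prod.shift_bounds_nat_ivl)
  also have "\<dots> = ?f r * (\<Prod>j<Suc r. ?f (Suc j + r))"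
    by (simp add: atLeast0LessThan prod.lessThan_Suc_shift del: prod.lessThan_Suc)
  also have "(\<Prod>j<Suc r. ?f (Suc j + r)) = (\<Prod>j<Suc r. fps_X ^ r * (1 + fps_X ^ Suc j))"
    by (intro prod.cong refl) (simp add: algebra_simps power_add)
  also have "(\<Prod>j<Suc r. fps_X ^ r * (1 + fps_X ^ Suc j)) = fps_X ^ (r * Suc r) * qpoch_neg (Suc r)"
    by (simp add: prod.distrib qpoch_neg_conv_lessThan flip: power_mult power_add)
  also have "prod ?f {0..<r} = (\<Prod>i<r. fps_X ^ i * (1 + fps_X ^ (r - i)))"
    by (intro prod.cong) (auto simp: algebra_simps simp flip: power_add)
  also have "\<dots> = fps_X ^ (\<Sum>i<r. i) * (\<Prod>i<r. 1 + fps_X ^ (r - i))"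
    by (simp add: prod.distrib power_sum)
  also have "(\<Prod>i<r. 1 + fps_X ^ (r - i) :: rat fps) = qpoch_neg r"
    unfolding qpoch_neg_conv_lessThan using prod.nat_diff_reindex[of "\<lambda>i. 1 + fps_X ^ Suc i :: rat fps" r]
    by (simp add: Suc_diff_Suc)
  also have "?f r = 2 * fps_X ^ r"
    by simp
  finally have "(\<Prod>i<2*r+2. ?f i) = 2 * fps_X ^ ((\<Sum>i<r. i) + r + r * Suc r) * qpoch_neg r * qpoch_neg (Suc r)"
    by (simp add: power_add algebra_simps)
  moreover have "2 * (\<Sum>i<r. i) = r * (r - 1)"
  proof (induction r)
    case (Suc r)
    then show ?case by (cases r) (simp_all add: algebra_simps)
  qed simp
  then have "(\<Sum>i<r. i) + r + r * Suc r = 3 * tri r"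
    using two_mult_tri[of r] by (cases r) (simp_all add: algebra_simps)
  ultimately show ?thesis
    by simp
qed

lemma two_mult_three_tri_add_tri: "2 * (3 * tri r + tri j) = 3 * (r * (r + 1)) + j * (j + 1)"
  by (simp only: two_mult_tri[symmetric]) simp

lemma qbinomial_exponent_below:
  assumes "j \<le> r"
  shows "(r - j) * (r - j - 1) div 2 + r * (2*r+2 - (r - j)) = 3 * tri r + tri j"
proof -
  obtain s where r: "r = j + s"
    using assms le_Suc_ex by blast
  have half: "2 * (s * (s - 1) div 2) = s * (s - 1)"
    by (cases s) simp_all
  have key: "s * (s - 1) + 2 * (r * (2*j + s + 2)) = 3 * (r * (r + 1)) + j * (j + 1)"
  proof (cases s)
    case (Suc s')
    then have "s = s' + 1"
      by simp
    then show ?thesis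
      using r by (simp add: algebra_simps)
  qed (use r in \<open>simp add: algebra_simps\<close>)
  have "2 * (s * (s - 1) div 2 + r * (2*j + s + 2)) = s * (s - 1) + 2 * (r * (2*j + s + 2))"
    by (simp only: distrib_left half)
  also have "\<dots> = 2 * (3 * tri r + tri j)"
    by (simp only: key two_mult_three_tri_add_tri)
  finally have "2 * (s * (s - 1) div 2 + r * (2*j + s + 2)) = 2 * (3 * tri r + tri j)" .
  moreover have "r - j = s" "2*r+2 - s = 2*j + s + 2"
    using r by simp_all
  ultimately show ?thesis
    by simp
qed

lemma qbinomial_exponent_above:
  assumes "j \<le> r + 1"
  shows "(j + (r+1)) * (j + (r+1) - 1) div 2 + r * (2*r+2 - (j + (r+1))) = 3 * tri r + tri j"
proof -
  obtain t where t: "r + 1 = j + t"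
    using assms le_Suc_ex by blast
  have half: "2 * (x div 2 + y) = x + 2 * y" if "even x" for x y :: nat
    using that by simp
  have key: "(j + (r + 1)) * (j + r) + 2 * (r * t) = 3 * (r * (r + 1)) + j * (j + 1)"
  proof (cases t)
    case 0
    then have "j = r + 1"
      using t by simp
    then show ?thesis
      using 0 by (simp add: algebra_simps)
  next
    case (Suc u)
    then have "r = j + u" "t = u + 1"
      using t by simp_all
    then show ?thesis
      by (simp add: algebra_simps)
  qed
  have "2 * ((j + (r + 1)) * (j + r) div 2 + r * t) = (j + (r + 1)) * (j + r) + 2 * (r * t)"
    by (rule half) simp
  also have "\<dots> = 2 * (3 * tri r + tri j)"
    by (simp only: key two_mult_three_tri_add_tri)
  finally have "2 * ((j + (r + 1)) * (j + r) div 2 + r * t) = 2 * (3 * tri r + tri j)" .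
  moreover have "j + (r+1) - 1 = j + r" "2*r+2 - (j + (r+1)) = t"
    using t by simp_all
  ultimately show ?thesis
    by simp
qed

lemma qbinomial_sum_split:
  "(\<Sum>k=0..2*r+2. qbinomial (2*r+2) k * fps_X ^ (k * (k - 1) div 2 + r * (2*r+2 - k)))
     = fps_X ^ (3 * tri r) * ((\<Sum>j<Suc r. qbinomial (2*r+2) (r - j) * fps_X ^ tri j)
                           + (\<Sum>j<r+2. qbinomial (2*r+2) (j + (r+1)) * fps_X ^ tri j))"
proof -
  define g where
    "g = (\<lambda>k. qbinomial (2*r+2) k * fps_X ^ (k * (k - 1) div 2 + r * (2*r+2 - k)))"
  have "(\<Sum>k=0..2*r+2. g k) = (\<Sum>k\<in>{0..<Suc (2*r+2)}. g k)"
    by (simp only: atLeastLessThanSuc_atLeastAtMost)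
  also have "\<dots> = (\<Sum>k\<in>{0..<Suc r}. g k) + (\<Sum>k\<in>{Suc r..<Suc (2*r+2)}. g k)"
    by (rule sum.atLeastLessThan_concat[symmetric]) simp_all
  also have "(\<Sum>k\<in>{0..<Suc r}. g k) = (\<Sum>j<Suc r. g (r - j))"
    using sum.nat_diff_reindex[of g "Suc r"] by (simp add: atLeast0LessThan)
  also have "(\<Sum>k\<in>{Suc r..<Suc (2*r+2)}. g k) = (\<Sum>k\<in>{0+(r+1)..<(r+2)+(r+1)}. g k)"
    by (rule arg_cong[where f="sum g"]) auto
  also have "\<dots> = (\<Sum>j<r+2. g (j + (r+1)))"
    unfolding atLeast0LessThan[symmetric] by (rule sum.shift_bounds_nat_ivl)
  also have "(\<Sum>j<Suc r. g (r - j)) = fps_X ^ (3 * tri r) * (\<Sum>j<Suc r. qbinomial (2*r+2) (r - j) * fps_X ^ tri j)"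
    unfolding sum_distrib_left
  proof (intro sum.cong refl)
    fix j assume "j \<in> {..<Suc r}"
    then have "j \<le> r"
      by simp
    from qbinomial_exponent_below[OF this]
    show "g (r - j) = fps_X ^ (3 * tri r) * (qbinomial (2 * r + 2) (r - j) * fps_X ^ tri j)"
      unfolding g_def by (simp only: power_add) (simp add: algebra_simps)
  qed
  also have "(\<Sum>j<r+2. g (j + (r+1))) = fps_X ^ (3 * tri r) * (\<Sum>j<r+2. qbinomial (2*r+2) (j + (r+1)) * fps_X ^ tri j)"
    unfolding sum_distrib_left
  proof (intro sum.cong refl)
    fix j assume "j \<in> {..<r+2}"
    then have "j \<le> r + 1"
      by simp
    from qbinomial_exponent_above[OF this]
    show "g (j + (r + 1)) = fps_X ^ (3 * tri r) * (qbinomial (2 * r + 2) (j + (r + 1)) * fps_X ^ tri j)"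
      unfolding g_def by (simp add: power_add algebra_simps)
  qed
  finally show ?thesis
    unfolding g_def by (simp add: distrib_left)
qed

text \<open>A finite form of Gauss's identity for \<open>\<psi>\<close>, from the \<open>q\<close>-binomial theorem with
  \<open>a = r\<close> and \<open>m = 2r + 2\<close>.\<close>
lemma finite_gauss_identity:
  "2 * qpoch_neg r * qpoch_neg (Suc r) =
     (\<Sum>j<Suc r. qbinomial (2*r+2) (r - j) * fps_X ^ tri j)
     + (\<Sum>j<r+2. qbinomial (2*r+2) (j + (r+1)) * fps_X ^ tri j)"
proof -
  have "fps_X ^ (3 * tri r) * (2 * qpoch_neg r * qpoch_neg (Suc r))
      = 2 * fps_X ^ (3 * tri r) * qpoch_neg r * qpoch_neg (Suc r)"
    by (simp add: algebra_simps)
  also have "\<dots> = (\<Prod>i<2*r+2. fps_X ^ r + fps_X ^ i)"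
    by (rule prod_X_power_add_X_power[symmetric])
  also have "\<dots> = fps_X ^ (3 * tri r) * ((\<Sum>j<Suc r. qbinomial (2*r+2) (r - j) * fps_X ^ tri j)
                           + (\<Sum>j<r+2. qbinomial (2*r+2) (j + (r+1)) * fps_X ^ tri j))"
    by (simp only: qbinomial_theorem qbinomial_sum_split)
  finally show ?thesis
    by simp
qed

lemma qbinomial_X_tri_agree:
  assumes "k \<le> m" "j < N \<Longrightarrow> N \<le> min k (m - k) + 1"
  shows "fps_agree N (euler_fps * (qbinomial m k * fps_X ^ tri j)) (fps_X ^ tri j)"
proof (cases "j < N")
  case True
  then have "fps_agree N (qbinomial m k * euler_fps * fps_X ^ tri j) (1 * fps_X ^ tri j)"
    using assms by (intro fps_agree_mult fps_agree_refl fps_agree_mono[OF qbinomial_agree_inverse_euler])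
  then show ?thesis
    by (simp add: ac_simps)
next
  case False
  then have N: "N \<le> tri j"
    using le_tri[of j] by simp
  then have "fps_agree N (fps_X ^ tri j * (euler_fps * qbinomial m k)) 0"
    by (rule fps_agree_X_power_mult)
  also have "fps_agree N 0 (fps_X ^ tri j * 1 :: rat fps)"
    using fps_agree_X_power_mult[OF N, of 1] by (rule fps_agree_sym)
  finally show ?thesis
    by (simp add: ac_simps)
qed

lemma psi_euler_agree: "fps_agree N (psi_fps * euler_fps) (fps_dilate 2 euler_fps ^ 2)"
proof -
  define r where "r = 2 * N"
  define S1 where "S1 = (\<Sum>j<Suc r. qbinomial (2*r+2) (r - j) * fps_X ^ tri j)"
  define S2 where "S2 = (\<Sum>j<r+2. qbinomial (2*r+2) (j + (r+1)) * fps_X ^ tri j)"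
  have "fps_agree N (euler_fps * S1) (\<Sum>j<Suc r. fps_X ^ tri j)"
    unfolding S1_def sum_distrib_left by (intro fps_agree_sum qbinomial_X_tri_agree) (auto simp: r_def)
  also have "fps_agree N \<dots> psi_fps"
    by (rule sum_X_power_tri_agree_psi) (simp add: r_def)
  finally have S1: "fps_agree N (euler_fps * S1) psi_fps" .
  have "fps_agree N (euler_fps * S2) (\<Sum>j<r+2. fps_X ^ tri j)"
    unfolding S2_def sum_distrib_left by (intro fps_agree_sum qbinomial_X_tri_agree) (auto simp: r_def)
  also have "fps_agree N \<dots> psi_fps"
    by (rule sum_X_power_tri_agree_psi) (simp add: r_def)
  finally have S2: "fps_agree N (euler_fps * S2) psi_fps" .
  have "2 * (qpoch_neg r * euler_fps) * (qpoch_neg (Suc r) * euler_fps)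
      = euler_fps * (euler_fps * (2 * qpoch_neg r * qpoch_neg (Suc r)))"
    by (simp only: ac_simps)
  also have "2 * qpoch_neg r * qpoch_neg (Suc r) = S1 + S2"
    unfolding S1_def S2_def by (rule finite_gauss_identity)
  finally have "2 * (qpoch_neg r * euler_fps) * (qpoch_neg (Suc r) * euler_fps)
      = euler_fps * (euler_fps * S1 + euler_fps * S2)"
    by (simp only: distrib_left)
  moreover have "fps_agree N (2 * (qpoch_neg r * euler_fps) * (qpoch_neg (Suc r) * euler_fps))
      (2 * fps_dilate 2 euler_fps * fps_dilate 2 euler_fps)"
    by (intro fps_agree_mult fps_agree_refl fps_agree_mono[OF qpoch_neg_agree]) (simp_all add: r_def)
  moreover have "fps_agree N (euler_fps * (euler_fps * S1 + euler_fps * S2)) (euler_fps * (psi_fps + psi_fps))"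
    by (intro fps_agree_mult fps_agree_add fps_agree_refl S1 S2)
  ultimately have "fps_agree N (2 * (psi_fps * euler_fps)) (2 * fps_dilate 2 euler_fps ^ 2)"
    by (simp add: fps_agree_def algebra_simps power2_eq_square)
  then show ?thesis
    by (simp add: fps_agree_def numeral_fps_const)
qed

theorem gauss_psi_euler: "psi_fps * euler_fps = fps_dilate 2 euler_fps ^ 2"
  by (rule fps_eqI_agree) (rule psi_euler_agree)

section \<open>Representations by \<open>x\<^sup>2 + 3y\<^sup>2\<close>\<close>

lemma of_nat_bit_eq_0_iff: "(of_nat n :: bit) = 0 \<longleftrightarrow> even n"
  by (induction n) auto

lemma even_card_involution:
  assumes "\<And>x. x \<in> X \<Longrightarrow> h x \<in> X" "\<And>x. x \<in> X \<Longrightarrow> h (h x) = x" "\<And>x. x \<in> X \<Longrightarrow> h x \<noteq> x"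
  shows "even (card X)"
proof -
  have "(\<Sum>x\<in>X. 1 :: bit) = 0"
    by (rule sum_involution_eq_0[where h = h]) (use assms in auto)
  then show ?thesis
    by (simp add: of_nat_bit_eq_0_iff)
qed

lemma card_involution_cong:
  assumes "finite A" "\<And>x. x \<in> A \<Longrightarrow> h x \<in> A" "\<And>x. x \<in> A \<Longrightarrow> h (h x) = x"
  shows "[card A = card {x \<in> A. h x = x}] (mod 2)"
proof -
  have "card A = card {x \<in> A. h x = x} + card {x \<in> A. h x \<noteq> x}"
    using assms(1) by (subst card_Un_disjoint[symmetric]) (auto intro: arg_cong[where f = card])
  moreover have "even (card {x \<in> A. h x \<noteq> x})"
    using assms by (intro even_card_involution[where h = h]) auto
  ultimately show ?thesis
    by (auto simp: cong_def)
qed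

definition odd_reps :: "nat \<Rightarrow> (int \<times> int) set" where
  "odd_reps n = {(x, y). 0 < x \<and> 0 < y \<and> odd x \<and> odd y \<and> x^2 + 3 * y^2 = 8 * int n + 4}"

text \<open>Multiplication of \<open>x + y\<surd>-3\<close> by the sixth root of unity \<open>(1 \<plusminus> \<surd>-3) / 2\<close>, with the
  sign chosen to keep both coordinates odd, followed by taking absolute values.\<close>
definition reps_involution :: "int \<times> int \<Rightarrow> int \<times> int" where
  "reps_involution z = (case z of (x, y) \<Rightarrow>
     if 4 dvd (x - y) then (\<bar>x - 3 * y\<bar> div 2, (x + y) div 2)
     else ((x + 3 * y) div 2, \<bar>x - y\<bar> div 2))"

lemma reps_involution_4_dvd:
  assumes "(x, y) \<in> odd_reps n" "4 dvd (x - y)"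
  shows "reps_involution (x, y) \<in> odd_reps n"
    and "reps_involution (reps_involution (x, y)) = (x, y)"
    and "reps_involution (x, y) = (x, y) \<longleftrightarrow> x = y"
proof -
  have x: "0 < x" "odd x" and y: "0 < y" "odd y" and norm: "x^2 + 3 * y^2 = 8 * int n + 4"
    using assms(1) by (auto simp: odd_reps_def)
  obtain k where k: "x - y = 4 * k"
    using assms(2) by (auto elim: dvdE)
  define u where "u = 2 * k - y"
  define v where "v = 2 * k + y"
  have "x - 3 * y = 2 * u" "x + y = 2 * v"
    using k by (simp_all add: u_def v_def)
  then have t: "reps_involution (x, y) = (\<bar>u\<bar>, v)"
    using assms(2) by (simp add: reps_involution_def abs_mult)
  have "odd u" "odd v" "0 < v"
    using x y k by (simp_all add: u_def v_def)
  moreover have "\<bar>u\<bar>^2 + 3 * v^2 = x^2 + 3 * y^2"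
    using k by (simp add: u_def v_def power2_eq_square algebra_simps)
  ultimately show "reps_involution (x, y) \<in> odd_reps n"
    unfolding t odd_reps_def using norm by auto
  show "reps_involution (reps_involution (x, y)) = (x, y)"
  proof (cases "0 \<le> u")
    case True
    have "\<not> 4 dvd (u - v)" "u + 3 * v = 2 * x" "\<bar>u - v\<bar> = 2 * y"
      using y k by (simp_all add: u_def v_def) presburger
    then show ?thesis
      using True t by (simp add: reps_involution_def)
  next
    case False
    have "4 dvd (- u - v)" "\<bar>- u - 3 * v\<bar> = 2 * x" "- u + v = 2 * y"
      using x k by (simp_all add: u_def v_def)
    then show ?thesis
      using False t by (simp add: reps_involution_def)
  qed
  show "reps_involution (x, y) = (x, y) \<longleftrightarrow> x = y"
    using t k y(1) by (auto simp: u_def v_def)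
qed

lemma reps_involution_not_4_dvd:
  assumes "(x, y) \<in> odd_reps n" "\<not> 4 dvd (x - y)"
  shows "reps_involution (x, y) \<in> odd_reps n"
    and "reps_involution (reps_involution (x, y)) = (x, y)"
    and "reps_involution (x, y) = (x, y) \<longleftrightarrow> x = 3 * y"
proof -
  have x: "0 < x" "odd x" and y: "0 < y" "odd y" and norm: "x^2 + 3 * y^2 = 8 * int n + 4"
    using assms(1) by (auto simp: odd_reps_def)
  have "even (x - y)"
    using x(2) y(2) by simp
  then obtain w where w: "x - y = 2 * w"
    by (rule evenE)
  have "odd w"
    using assms(2) w by presburger
  define u where "u = w + 2 * y"
  have "x + 3 * y = 2 * u"
    using w by (simp add: u_def)
  then have t: "reps_involution (x, y) = (u, \<bar>w\<bar>)"
    using assms(2) w by (simp add: reps_involution_def abs_mult)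
  have "odd u" "0 < u"
    using \<open>odd w\<close> x y w by (simp_all add: u_def)
  moreover have "u^2 + 3 * \<bar>w\<bar>^2 = x^2 + 3 * y^2"
    using w by (simp add: u_def power2_eq_square algebra_simps)
  ultimately show "reps_involution (x, y) \<in> odd_reps n"
    unfolding t odd_reps_def using norm \<open>odd w\<close> by auto
  show "reps_involution (reps_involution (x, y)) = (x, y)"
  proof (cases "0 \<le> w")
    case True
    have "\<not> 4 dvd (u - w)" "u + 3 * w = 2 * x" "\<bar>u - w\<bar> = 2 * y"
      using y w by (simp_all add: u_def) presburger
    then show ?thesis
      using True t by (simp add: reps_involution_def)
  next
    case False
    have "4 dvd (u + w)" "\<bar>u + 3 * w\<bar> = 2 * x" "u - w = 2 * y"
      using \<open>odd w\<close> x y w by (simp_all add: u_def) presburger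
    then show ?thesis
      using False t by (simp add: reps_involution_def)
  qed
  show "reps_involution (x, y) = (x, y) \<longleftrightarrow> x = 3 * y"
    using t w y(1) by (auto simp: u_def)
qed

lemma reps_involution:
  assumes "z \<in> odd_reps n"
  shows "reps_involution z \<in> odd_reps n" "reps_involution (reps_involution z) = z"
    and "reps_involution z = z \<longleftrightarrow> fst z = snd z \<or> fst z = 3 * snd z"
proof -
  obtain x y where z: "z = (x, y)"
    by fastforce
  have "x \<noteq> 3 * y" if "4 dvd (x - y)"
    using that assms z by (auto simp: odd_reps_def)
  moreover have "x \<noteq> y" if "\<not> 4 dvd (x - y)"
    using that by auto
  ultimately show "reps_involution z \<in> odd_reps n" "reps_involution (reps_involution z) = z"
    and "reps_involution z = z \<longleftrightarrow> fst z = snd z \<or> fst z = 3 * snd z"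
    using reps_involution_4_dvd[of x y n] reps_involution_not_4_dvd[of x y n] assms z
    by (cases "4 dvd (x - y)"; auto)+
qed

lemma finite_odd_reps: "finite (odd_reps n)"
proof (rule finite_subset)
  show "odd_reps n \<subseteq> {0..int (8*n+4)} \<times> {0..int (8*n+4)}"
  proof
    fix z assume "z \<in> odd_reps n"
    then obtain x y where z: "z = (x, y)" "0 < x" "0 < y" "x^2 + 3 * y^2 = 8 * int n + 4"
      by (auto simp: odd_reps_def)
    have "x \<le> x^2" "y \<le> y^2"
      using z by (simp_all add: power2_eq_square)
    then show "z \<in> {0..int (8*n+4)} \<times> {0..int (8*n+4)}"
      using z by auto
  qed
qed simp

lemma odd_square_eq_tri: "(2 * int a + 1)^2 = 8 * int (tri a) + 1"
  using arg_cong[OF two_mult_tri[of a], of int] by (simp add: power2_eq_square algebra_simps)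

lemma pos_odd_int_obtain:
  assumes "odd (x::int)" "0 < x"
  obtains a where "x = 2 * int a + 1"
proof -
  obtain c where c: "x = 2 * c + 1"
    using assms(1) by (auto elim: oddE)
  with assms(2) show thesis
    by (intro that[of "nat c"]) simp
qed

definition tri_reps :: "nat \<Rightarrow> (nat \<times> nat) set" where
  "tri_reps n = {(a, b). tri a + 3 * tri b = n}"

lemma odd_reps_eq_image_tri_reps:
  "odd_reps n = (\<lambda>(a, b). (2 * int a + 1, 2 * int b + 1)) ` tri_reps n"
proof (intro equalityI subsetI)
  fix z assume "z \<in> odd_reps n"
  then obtain x y where z: "z = (x, y)" "0 < x" "0 < y" "odd x" "odd y" "x^2 + 3 * y^2 = 8 * int n + 4"
    by (auto simp: odd_reps_def)
  obtain a b where ab: "x = 2 * int a + 1" "y = 2 * int b + 1"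
    using pos_odd_int_obtain z(2-5) by metis
  have "8 * int (tri a) + 1 + 3 * (8 * int (tri b) + 1) = 8 * int n + 4"
    using z(6) unfolding ab odd_square_eq_tri by simp
  then have "tri a + 3 * tri b = n"
    by simp
  then show "z \<in> (\<lambda>(a, b). (2 * int a + 1, 2 * int b + 1)) ` tri_reps n"
    using z(1) ab by (auto simp: tri_reps_def image_iff)
next
  fix z assume "z \<in> (\<lambda>(a, b). (2 * int a + 1, 2 * int b + 1)) ` tri_reps n"
  then obtain a b where z: "z = (2 * int a + 1, 2 * int b + 1)" "tri a + 3 * tri b = n"
    by (auto simp: tri_reps_def)
  have "(2 * int a + 1)^2 + 3 * (2 * int b + 1)^2 = 8 * int n + 4"
    unfolding odd_square_eq_tri by (simp add: algebra_simps flip: z(2))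
  then show "z \<in> odd_reps n"
    using z(1) by (simp add: odd_reps_def)
qed

lemma card_odd_reps: "card (odd_reps n) = card (tri_reps n)"
  unfolding odd_reps_eq_image_tri_reps by (rule card_image) (auto simp: inj_on_def)

lemma psi_psi3_nth: "(psi_fps * fps_dilate 3 psi_fps) $ n = of_nat (card (tri_reps n))"
proof -
  define T where "T = {i \<in> {0..n}. i \<in> range tri \<and> n - i \<in> range (\<lambda>b. 3 * tri b)}"
  have "(psi_fps * fps_dilate 3 psi_fps) $ n
      = (\<Sum>i=0..n. if i \<in> range tri \<and> n - i \<in> range (\<lambda>b. 3 * tri b) then 1 else 0)"
    unfolding fps_mult_nth
  proof (intro sum.cong refl)
    fix i
    have "(n - i) div 3 \<in> range tri \<and> 3 dvd (n - i) \<longleftrightarrow> n - i \<in> range (\<lambda>b. 3 * tri b)"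
      by (auto elim!: dvdE)
    then show "psi_fps $ i * fps_dilate 3 psi_fps $ (n - i)
        = (if i \<in> range tri \<and> n - i \<in> range (\<lambda>b. 3 * tri b) then 1 else 0)"
      by (auto simp: psi_fps_def fps_dilate_nth)
  qed
  also have "\<dots> = of_nat (card T)"
    unfolding T_def by (simp add: sum.If_cases Int_def conj_commute)
  also have "card T = card (tri_reps n)"
  proof -
    have "bij_betw (\<lambda>(a, b). tri a) (tri_reps n) T"
      unfolding bij_betw_def
    proof
      show "inj_on (\<lambda>(a, b). tri a) (tri_reps n)"
        by (auto simp: inj_on_def tri_reps_def)
      show "(\<lambda>(a, b). tri a) ` tri_reps n = T"
        by (auto simp: tri_reps_def T_def image_iff) (metis le_add_diff_inverse)
    qed
    then show ?thesis
      by (simp add: bij_betw_same_card)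
  qed
  finally show ?thesis .
qed

lemma tri_three_mult_Suc: "tri (Suc (3 * b)) = 9 * tri b + 1"
  using two_mult_tri[of "3 * b + 1"] two_mult_tri[of b] by (simp add: algebra_simps)

lemma odd_reps_diagonal:
  "{z \<in> odd_reps n. fst z = snd z} = (\<lambda>a. (2 * int a + 1, 2 * int a + 1)) ` {a. 4 * tri a = n}"
  unfolding odd_reps_eq_image_tri_reps by (auto simp: tri_reps_def image_iff)

lemma odd_reps_three_diagonal:
  "{z \<in> odd_reps n. fst z = 3 * snd z} = (\<lambda>b. (6 * int b + 3, 2 * int b + 1)) ` {b. 12 * tri b + 1 = n}"
proof (intro equalityI subsetI)
  fix z assume "z \<in> {z \<in> odd_reps n. fst z = 3 * snd z}"
  then obtain a b where "z = (2 * int a + 1, 2 * int b + 1)" "tri a + 3 * tri b = n" "a = 3 * b + 1"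
    unfolding odd_reps_eq_image_tri_reps by (auto simp: tri_reps_def)
  then show "z \<in> (\<lambda>b. (6 * int b + 3, 2 * int b + 1)) ` {b. 12 * tri b + 1 = n}"
    by (auto simp: tri_three_mult_Suc intro!: rev_image_eqI[of b])
next
  fix z assume "z \<in> (\<lambda>b. (6 * int b + 3, 2 * int b + 1)) ` {b. 12 * tri b + 1 = n}"
  then obtain b where "z = (2 * int (3 * b + 1) + 1, 2 * int b + 1)" "tri (3 * b + 1) + 3 * tri b = n"
    by (auto simp: tri_three_mult_Suc)
  then show "z \<in> {z \<in> odd_reps n. fst z = 3 * snd z}"
    unfolding odd_reps_eq_image_tri_reps
    by (auto simp: tri_reps_def intro!: rev_image_eqI[of "(3 * b + 1, b)"])
qed

lemma card_eq_if_inj: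
  assumes "inj f"
  shows "card {a. f a = n} = (if \<exists>a. n = f a then 1 else 0)"
proof (cases "\<exists>a. n = f a")
  case True
  then obtain a0 where "n = f a0"
    by blast
  with assms have "{a. f a = n} = {a0}"
    by (auto simp: inj_def)
  with True show ?thesis
    by simp
next
  case False
  then have "{a. f a = n} = {}"
    by auto
  with False show ?thesis
    by (simp only: card.empty) simp
qed

lemma fps_dilate_psi_nth: "r > 0 \<Longrightarrow> fps_dilate r psi_fps $ n = (if \<exists>a. n = r * tri a then 1 else 0)"
  by (auto simp: fps_dilate_nth psi_fps_def elim!: dvdE)

lemma card_fixpoints_reps_involution:
  "of_nat (card {z \<in> odd_reps n. reps_involution z = z})
     = (fps_dilate 4 psi_fps + fps_X * fps_dilate 12 psi_fps) $ n"
proof -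
  have "{z \<in> odd_reps n. reps_involution z = z}
      = {z \<in> odd_reps n. fst z = snd z} \<union> {z \<in> odd_reps n. fst z = 3 * snd z}"
    using reps_involution(3) by blast
  moreover have "{z \<in> odd_reps n. fst z = snd z} \<inter> {z \<in> odd_reps n. fst z = 3 * snd z} = {}"
    by (auto simp: odd_reps_def)
  ultimately have "card {z \<in> odd_reps n. reps_involution z = z}
      = card {z \<in> odd_reps n. fst z = snd z} + card {z \<in> odd_reps n. fst z = 3 * snd z}"
    using finite_odd_reps by (simp add: card_Un_disjoint)
  moreover have "card {z \<in> odd_reps n. fst z = snd z} = card {a. 4 * tri a = n}"
    and "card {z \<in> odd_reps n. fst z = 3 * snd z} = card {b. 12 * tri b + 1 = n}"
    unfolding odd_reps_diagonal odd_reps_three_diagonal by (auto intro!: card_image simp: inj_on_def)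
  moreover have "inj (\<lambda>a. 4 * tri a)" "inj (\<lambda>b. 12 * tri b + 1)"
    by (auto simp: inj_def)
  moreover have "(fps_X * fps_dilate 12 psi_fps) $ n = (if \<exists>b. n = 12 * tri b + 1 then 1 else 0)"
    by (cases n) (simp_all add: fps_dilate_psi_nth)
  ultimately show ?thesis
    by (simp add: card_eq_if_inj fps_dilate_psi_nth)
qed

lemma cong_imp_of_nat_diff_divide_in_Ints:
  assumes "[a = b] (mod m)"
  shows "(of_nat a - of_nat b) / of_nat m \<in> (\<int> :: 'a::field_char_0 set)"
proof -
  have "int m dvd int a - int b"
    using assms by (simp add: cong_iff_dvd_diff flip: cong_int_iff)
  then have "of_int (int a - int b) / of_int (int m) \<in> (\<int> :: 'a set)"
    by (rule of_int_divide_in_Ints)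
  then show ?thesis
    by simp
qed

theorem psi_psi3_cong:
  "fps_cong 2 (psi_fps * fps_dilate 3 psi_fps) (fps_dilate 4 psi_fps + fps_X * fps_dilate 12 psi_fps)"
proof (rule fps_congI_coeff)
  fix n
  have "[card (odd_reps n) = card {z \<in> odd_reps n. reps_involution z = z}] (mod 2)"
    using finite_odd_reps reps_involution(1,2) by (rule card_involution_cong)
  then have "(of_nat (card (odd_reps n)) - of_nat (card {z \<in> odd_reps n. reps_involution z = z})) / 2
      \<in> (\<int> :: rat set)"
    using cong_imp_of_nat_diff_divide_in_Ints by fastforce
  then show "((psi_fps * fps_dilate 3 psi_fps) $ n
      - (fps_dilate 4 psi_fps + fps_X * fps_dilate 12 psi_fps) $ n) / 2 \<in> \<int>"
    by (simp add: psi_psi3_nth card_odd_reps card_fixpoints_reps_involution)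
qed simp_all

section \<open>The generating function of \<open>b434\<close> modulo 8\<close>

lemma psi_cong_euler_cube: "fps_cong 2 psi_fps (euler_fps ^ 3)"
proof -
  have "fps_cong 2 (fps_dilate 2 euler_fps ^ 2) ((euler_fps ^ 2) ^ 2)"
    by (rule fps_cong_power[OF fps_cong_sym[OF fps_cong_square_dilate[OF int_coeffs_euler]]])
  then have "fps_cong 2 (psi_fps * euler_fps) (euler_fps ^ 3 * euler_fps)"
    by (simp add: gauss_psi_euler flip: power_mult power_Suc2)
  then show ?thesis
    by (rule fps_cong_cancel) simp_all
qed

definition eta_quotient :: "rat fps" where
  "eta_quotient = fps_dilate 3 euler_fps * fps_dilate 4 euler_fps * inverse (euler_fps * fps_dilate 12 euler_fps)"

lemma int_coeffs_eta_quotient: "int_coeffs eta_quotient"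
  unfolding eta_quotient_def by (simp add: int_coeffs_inverse)

lemma b434_eq_eta_quotient: "b434 n = \<lfloor>(eta_quotient ^ 4) $ n\<rfloor>"
proof -
  let ?num = "f_trunc n 3 ^ 4 * f_trunc n 4 ^ 4"
  let ?den = "f_trunc n 1 ^ 4 * f_trunc n 12 ^ 4"
  have "eta_quotient ^ 4 = fps_dilate 3 euler_fps ^ 4 * fps_dilate 4 euler_fps ^ 4
      * inverse (euler_fps ^ 4 * fps_dilate 12 euler_fps ^ 4)"
    unfolding eta_quotient_def by (simp add: power_mult_distrib fps_inverse_power fps_inverse_mult)
  moreover have "fps_agree (n + 1) ?num (fps_dilate 3 euler_fps ^ 4 * fps_dilate 4 euler_fps ^ 4)"
    by (intro fps_agree_mult fps_agree_power f_trunc_agree_dilate_euler) simp_all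
  moreover have "fps_agree (n + 1) (inverse ?den) (inverse (euler_fps ^ 4 * fps_dilate 12 euler_fps ^ 4))"
    using f_trunc_agree_dilate_euler[of 1 n] f_trunc_agree_dilate_euler[of 12 n]
    by (intro fps_agree_inverse fps_agree_mult fps_agree_power) (simp_all add: fps_dilate_def)
  ultimately have "fps_agree (n + 1) (?num * inverse ?den) (eta_quotient ^ 4)"
    by (simp add: fps_agree_mult)
  then show ?thesis
    unfolding b434_def by (simp add: fps_agree_def fps_divide_unit)
qed

lemma eta_quotient_cong:
  "fps_cong 2 eta_quotient (psi_fps * fps_dilate 3 psi_fps * inverse (fps_dilate 6 psi_fps))"
proof -
  let ?E = euler_fps and ?E3 = "fps_dilate 3 euler_fps"
  have psi3: "fps_cong 2 (fps_dilate 3 psi_fps) (?E3 ^ 3)"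
    using fps_cong_dilate[OF _ psi_cong_euler_cube, of 3] by (simp add: fps_dilate_power)
  have "fps_cong 2 (fps_dilate 2 (fps_dilate 3 psi_fps)) (fps_dilate 3 psi_fps ^ 2)"
    by (rule fps_cong_sym[OF fps_cong_square_dilate]) simp
  also have "fps_cong 2 \<dots> ((?E3 ^ 3) ^ 2)"
    by (rule fps_cong_power[OF psi3])
  finally have psi6: "fps_cong 2 (fps_dilate 6 psi_fps) (?E3 ^ 6)"
    by (simp add: fps_dilate_dilate flip: power_mult)
  have E4: "fps_cong 2 (fps_dilate 4 ?E) (?E ^ 4)"
    by (rule fps_cong_sym[OF fps_cong_power4_dilate]) simp
  have E12: "fps_cong 2 (fps_dilate 12 ?E) (?E3 ^ 4)"
    using fps_cong_sym[OF fps_cong_power4_dilate[of ?E3]] by (simp add: fps_dilate_dilate)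
  \<comment> \<open>After clearing denominators both sides become \<open>f(q)\<^sup>4 f(q\<^sup>3)\<^sup>7\<close> modulo 2.\<close>
  define u where "u = ?E * fps_dilate 12 ?E * fps_dilate 6 psi_fps"
  have "eta_quotient * u = ?E3 * fps_dilate 4 ?E * fps_dilate 6 psi_fps
      * (inverse (?E * fps_dilate 12 ?E) * (?E * fps_dilate 12 ?E))"
    unfolding eta_quotient_def u_def by (simp only: ac_simps)
  also have "\<dots> = ?E3 * fps_dilate 4 ?E * fps_dilate 6 psi_fps"
    by (simp add: inverse_mult_eq_1)
  also have "fps_cong 2 \<dots> (?E3 * ?E ^ 4 * ?E3 ^ 6)"
    by (intro fps_cong_mult fps_cong_refl E4 psi6) simp
  also have "?E3 * ?E ^ 4 * ?E3 ^ 6 = ?E ^ 3 * ?E3 ^ 3 * ?E * ?E3 ^ 4"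
    by (simp add: eval_nat_numeral algebra_simps)
  also have "fps_cong 2 \<dots> (psi_fps * fps_dilate 3 psi_fps * ?E * fps_dilate 12 ?E)"
    using fps_cong_mult[OF fps_cong_mult[OF fps_cong_mult[OF psi_cong_euler_cube psi3]
          fps_cong_refl[OF int_coeffs_euler]] E12]
    by (rule fps_cong_sym)
  also have "\<dots> = psi_fps * fps_dilate 3 psi_fps * inverse (fps_dilate 6 psi_fps) * u"
    unfolding u_def by (simp add: inverse_mult_eq_1' algebra_simps)
  finally show ?thesis
    by (rule fps_cong_cancel) (simp_all add: int_coeffs_eta_quotient int_coeffs_inverse u_def)
qed

lemma psi_psi3_power4_odd_term_cong:
  defines "D \<equiv> psi_fps * fps_dilate 3 psi_fps" and "W \<equiv> inverse (fps_dilate 6 psi_fps)"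
  defines "D\<^sub>0 \<equiv> fps_even_part D" and "D\<^sub>1 \<equiv> fps_odd_part D"
  shows "fps_cong 2 (W ^ 4 * D\<^sub>0 * D\<^sub>1 * (D\<^sub>0 ^ 2 + D\<^sub>1 ^ 2))
    (fps_X * fps_dilate 4 (W * psi_fps * fps_dilate 3 psi_fps * fps_dilate 2 psi_fps)
      + fps_X ^ 3 * fps_dilate 4 D)"
proof -
  let ?R = "fps_dilate 4 psi_fps + fps_X * fps_dilate 12 psi_fps"
  have D_cong: "fps_cong 2 D ?R"
    unfolding D_def by (rule psi_psi3_cong)
  have R_parts: "fps_even_part ?R = fps_dilate 4 psi_fps" "fps_odd_part ?R = fps_X * fps_dilate 12 psi_fps"
    by (simp_all add: fps_even_part_eq fps_odd_part_eq fps_even_dilate fps_odd_X_mult)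
  have "fps_cong 2 (D\<^sub>0 ^ 2 + D\<^sub>1 ^ 2) (fps_dilate 2 D)"
    unfolding D\<^sub>0_def D\<^sub>1_def by (rule fps_cong_even_odd_part_squares) (simp add: D_def)
  also have "fps_cong 2 \<dots> (fps_dilate 2 ?R)"
    by (rule fps_cong_dilate[OF _ D_cong]) simp
  finally have sum_sq: "fps_cong 2 (D\<^sub>0 ^ 2 + D\<^sub>1 ^ 2) (fps_dilate 8 psi_fps + fps_X ^ 2 * fps_dilate 24 psi_fps)"
    by (simp add: fps_dilate_add fps_dilate_mult fps_dilate_X fps_dilate_dilate)
  have "fps_cong 2 (W ^ 4) (fps_dilate 4 W)"
    by (rule fps_cong_power4_dilate) (simp add: W_def int_coeffs_inverse)
  then have W4: "fps_cong 2 (W ^ 4) (inverse (fps_dilate 24 psi_fps))"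
    by (simp add: W_def fps_dilate_inverse fps_dilate_dilate)
  have "fps_cong 2 (W ^ 4 * D\<^sub>0 * D\<^sub>1 * (D\<^sub>0 ^ 2 + D\<^sub>1 ^ 2))
      (inverse (fps_dilate 24 psi_fps) * fps_dilate 4 psi_fps * (fps_X * fps_dilate 12 psi_fps)
        * (fps_dilate 8 psi_fps + fps_X ^ 2 * fps_dilate 24 psi_fps))"
  proof (intro fps_cong_mult W4 sum_sq)
    show "fps_cong 2 D\<^sub>0 (fps_dilate 4 psi_fps)" "fps_cong 2 D\<^sub>1 (fps_X * fps_dilate 12 psi_fps)"
      using fps_cong_fps_even_part[OF D_cong] fps_cong_fps_odd_part[OF D_cong]
      by (simp_all add: D\<^sub>0_def D\<^sub>1_def R_parts)
  qed
  also have "\<dots> = fps_X * fps_dilate 4 (W * psi_fps * fps_dilate 3 psi_fps * fps_dilate 2 psi_fps)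
      + fps_X ^ 3 * fps_dilate 4 D"
    by (simp add: W_def D_def fps_dilate_mult fps_dilate_inverse fps_dilate_dilate inverse_mult_eq_1'
        power2_eq_square power3_eq_cube algebra_simps)
  finally show ?thesis .
qed

lemma fps_even_inverse_dilate_6: "fps_even (inverse (fps_dilate 6 psi_fps))"
proof -
  have "inverse (fps_dilate 6 psi_fps) = fps_dilate 2 (inverse (fps_dilate 3 psi_fps))"
    by (simp add: fps_dilate_inverse fps_dilate_dilate)
  then show ?thesis
    by (simp add: fps_even_dilate)
qed

lemma eta_quotient_power4_nth_cong:
  "((eta_quotient ^ 4) $ (4 * t + 3)
     - 4 * (fps_dilate 4 psi_fps + fps_X * fps_dilate 12 psi_fps) $ t) / 8 \<in> \<int>"
proof -
  define D where "D = psi_fps * fps_dilate 3 psi_fps"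
  define W where "W = inverse (fps_dilate 6 psi_fps)"
  define V where "V = W ^ 4 * fps_even_part D * fps_odd_part D * (fps_even_part D ^ 2 + fps_odd_part D ^ 2)"
  let ?n = "4 * t + 3" and ?R = "fps_dilate 4 psi_fps + fps_X * fps_dilate 12 psi_fps"
  have "((eta_quotient ^ 4) $ ?n - ((D * W) ^ 4) $ ?n) / 8 \<in> \<int>"
    using fps_cong_coeff[OF fps_cong_power4[OF eta_quotient_cong]] by (simp add: D_def W_def)
  moreover have "((D * W) ^ 4) $ ?n = 4 * V $ ?n"
    unfolding V_def by (rule fps_power4_odd_nth) (simp_all add: W_def fps_even_inverse_dilate_6)
  moreover have "(V $ ?n - D $ t) / 2 \<in> \<int>"
  proof -
    define Z where "Z = W * psi_fps * fps_dilate 3 psi_fps * fps_dilate 2 psi_fps"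
    have "(V $ ?n - (fps_X * fps_dilate 4 Z + fps_X ^ 3 * fps_dilate 4 D) $ ?n) / 2 \<in> \<int>"
      using psi_psi3_power4_odd_term_cong unfolding V_def D_def W_def Z_def
      by (rule fps_cong_coeff) simp
    moreover have "\<not> 4 dvd Suc (Suc (4 * t))"
      by presburger
    ultimately show ?thesis
      by (simp add: fps_X_power_mult_nth fps_dilate_nth)
  qed
  moreover have "(D $ t - ?R $ t) / 2 \<in> \<int>"
    unfolding D_def by (rule fps_cong_coeff[OF psi_psi3_cong]) simp
  moreover have "((eta_quotient ^ 4) $ ?n - 4 * ?R $ t) / 8
      = ((eta_quotient ^ 4) $ ?n - 4 * V $ ?n) / 8 + (V $ ?n - D $ t) / 2 + (D $ t - ?R $ t) / 2"
    by (simp add: field_simps)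
  ultimately show ?thesis
    by (metis Ints_add)
qed

lemma psi4_psi12_nth:
  "(fps_dilate 4 psi_fps + fps_X * fps_dilate 12 psi_fps) $ (4 * M) = psi_fps $ M"
  "(fps_dilate 4 psi_fps + fps_X * fps_dilate 12 psi_fps) $ (12 * M + 1) = psi_fps $ M"
proof -
  have "\<not> 12 dvd (4 * M - 1)" if "M > 0"
    using that by presburger
  then show "(fps_dilate 4 psi_fps + fps_X * fps_dilate 12 psi_fps) $ (4 * M) = psi_fps $ M"
    by (cases M) (simp_all add: fps_dilate_nth)
  have "\<not> 4 dvd (12 * M + 1)"
    by presburger
  then show "(fps_dilate 4 psi_fps + fps_X * fps_dilate 12 psi_fps) $ (12 * M + 1) = psi_fps $ M"
    by (simp add: fps_dilate_nth)
qed

lemma b434_cong_0_mod_8: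
  assumes "(fps_dilate 4 psi_fps + fps_X * fps_dilate 12 psi_fps) $ t = 0"
  shows "[b434 (4 * t + 3) = 0] (mod 8)"
proof -
  have "(eta_quotient ^ 4) $ (4 * t + 3) \<in> \<int>"
    using int_coeffs_power[OF int_coeffs_eta_quotient, of 4] by (simp add: int_coeffs_def)
  then obtain z where z: "(eta_quotient ^ 4) $ (4 * t + 3) = of_int z"
    by (elim Ints_cases)
  have "((eta_quotient ^ 4) $ (4 * t + 3) - 4 * 0) / 8 \<in> (\<int> :: rat set)"
    using eta_quotient_power4_nth_cong[of t] by (simp only: assms)
  then have "(of_int z :: rat) / 8 \<in> \<int>"
    by (simp add: z)
  then obtain w where "(of_int z :: rat) / 8 = of_int w"
    by (elim Ints_cases)
  then have "(of_int z :: rat) = of_int (8 * w)"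
    by (simp add: divide_eq_eq)
  then have "z = 8 * w"
    by (simp only: of_int_eq_iff)
  moreover have "b434 (4 * t + 3) = z"
    by (simp add: b434_eq_eta_quotient z)
  ultimately show ?thesis
    by (simp add: cong_0_iff)
qed

lemma prime_power_mult_not_square:
  fixes p c x :: nat
  assumes "prime p" "\<not> p dvd c" "odd e"
  shows "p ^ e * c \<noteq> x ^ 2"
proof
  assume eq: "p ^ e * c = x ^ 2"
  have "c \<noteq> 0"
    using assms(2) by (metis dvd_0_right)
  have "x \<noteq> 0"
  proof
    assume "x = 0"
    with eq have "p ^ e * c = 0"
      by simp
    with assms(1) \<open>c \<noteq> 0\<close> show False
      by (simp add: prime_gt_0_nat)
  qed
  have "multiplicity p (x ^ 2) = 2 * multiplicity p x"
    using assms(1) \<open>x \<noteq> 0\<close> by (intro prime_elem_multiplicity_power_distrib) simp_all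
  moreover have "multiplicity p (p ^ e * c) = e"
    using assms \<open>c \<noteq> 0\<close>
    by (simp add: prime_elem_multiplicity_mult_distrib not_dvd_imp_multiplicity_0 prime_gt_0_nat)
  ultimately have "e = 2 * multiplicity p x"
    using eq by simp
  with assms(3) show False
    by simp
qed

lemma psi_fps_nth_eq_0:
  assumes "\<And>x. 8 * M + 1 \<noteq> x ^ 2"
  shows "psi_fps $ M = 0"
proof (rule ccontr)
  assume "psi_fps $ M \<noteq> 0"
  then obtain j where "M = tri j"
    by (auto simp: psi_fps_def split: if_splits)
  then have "8 * M + 1 = (2 * j + 1) ^ 2"
    using two_mult_tri[of j] by (simp add: power2_eq_square algebra_simps)
  with assms show False
    by blast
qed

lemma eight_mult_add_one_prime_power:
  fixes p :: nat
  assumes "odd p"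
  shows "8 * (p ^ (2*k+1) * m + (p ^ (2*k+2) - 1) div 8) + 1 = p ^ (2*k+1) * (8 * m + p)"
proof -
  have "[p ^ 2 = 1] (mod 8)"
    using square_mod_8_eq_1_iff[of p] assms by blast
  then have "[(p ^ 2) ^ (k + 1) = 1 ^ (k + 1)] (mod 8)"
    by (rule cong_pow)
  moreover have "p ^ (2*k+2) = (p ^ 2) ^ (k + 1)"
    unfolding power_mult[symmetric] by (simp add: algebra_simps)
  ultimately have "8 dvd p ^ (2*k+2) - 1"
    by (intro cong_to_1_nat) simp
  moreover have "p ^ (2*k+2) \<ge> 1"
    using assms by (simp add: Suc_le_eq odd_pos)
  ultimately have "8 * ((p ^ (2*k+2) - 1) div 8) + 1 = p ^ (2*k+1) * p"
    by simp
  then show ?thesis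
    by (simp add: distrib_left add.assoc)
qed

lemma psi_fps_nth_prime_power_eq_0:
  fixes p :: nat
  assumes "prime p" "odd p" "\<not> p dvd m"
  shows "psi_fps $ (p ^ (2*k+1) * m + (p ^ (2*k+2) - 1) div 8) = 0"
proof (rule psi_fps_nth_eq_0)
  have "\<not> p dvd 8"
  proof
    assume "p dvd 8"
    then have "p dvd 2"
      using assms(1) prime_dvd_power[of p 2 3] by simp
    then have "p \<le> 2"
      by (simp add: dvd_imp_le)
    with assms(1,2) show False
      using prime_ge_2_nat[of p] by (cases "p = 2") simp_all
  qed
  with assms have "\<not> p dvd 8 * m + p"
    by (simp add: dvd_add_left_iff prime_dvd_mult_iff)
  then show "8 * (p ^ (2*k+1) * m + (p ^ (2*k+2) - 1) div 8) + 1 \<noteq> x ^ 2" for x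
    unfolding eight_mult_add_one_prime_power[OF assms(2)]
    by (rule prime_power_mult_not_square[OF assms(1)]) simp
qed

theorem mainTheorem20:
  fixes p k m :: nat
  assumes "prime p" and "p \<ge> 5" and "Legendre (-2) (int p) = -1" and "\<not> p dvd m"
  shows "[b434 (16 * p ^ (2*k+1) * m + 2 * p ^ (2*k+2) + 1) = 0] (mod 8)
       \<and> [b434 (48 * p ^ (2*k+1) * m + 6 * p ^ (2*k+2) + 1) = 0] (mod 8)"
proof -
  have "odd p"
    using assms(1,2) by (intro prime_odd_nat) auto
  define M where "M = p ^ (2*k+1) * m + (p ^ (2*k+2) - 1) div 8"
  have "psi_fps $ M = 0"
    unfolding M_def using assms(1) \<open>odd p\<close> assms(4) by (rule psi_fps_nth_prime_power_eq_0)
  then have b434_0: "[b434 (4 * t + 3) = 0] (mod 8)" if "t = 4 * M \<or> t = 12 * M + 1" for t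
    using that by (intro b434_cong_0_mod_8) (elim disjE; simp only: psi4_psi12_nth)
  have "8 * M + 1 = 8 * (p ^ (2*k+1) * m) + p ^ (2*k+2)"
    unfolding M_def eight_mult_add_one_prime_power[OF \<open>odd p\<close>] by (simp add: algebra_simps)
  then have index: "16 * p ^ (2*k+1) * m + 2 * p ^ (2*k+2) + 1 = 4 * (4 * M) + 3"
    "48 * p ^ (2*k+1) * m + 6 * p ^ (2*k+2) + 1 = 4 * (12 * M + 1) + 3"
    by (simp_all only: mult.assoc) presburger+
  then show ?thesis
    unfolding index by (intro conjI b434_0) simp_all
qed

end
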